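(* For a comical set $X$, the homotopy $1$-category $\mathrm{ho}_1X$ — whose objects are the $0$-cubes of $X$, whose morphisms from $x$ to $y$ are the homotopy classes of $1$-cubes from $x$ to $y$, whose composition sends $([f],[g])$ to the class of any composite of $f$ and $g$, and whose identity at $x$ is $[x\sigma_1]$ — is a well-defined category (composition is well defined, unital and associative).
   Context: Cubical sets are presheaves on the box category $\square$ (objects $[1]^n=\{0<1\}^n$; morphisms generated by faces $\partial_{i,\varepsilon}$ inserting $\varepsilon$ as $i$-th coordinate, degeneracies $\sigma_i$ deleting the $i$-th coordinate, and max/min connections $\gamma_{i,1},\gamma_{i,0}$); operators act on the right, so for a $0$-cube $x$, $x\sigma_1$ is the degenerate $1$-cube at $x$. A cube is degenerate if it is $x\sigma_i$ or $x\gamma_{i,\varepsilon}$; composites of faces have unique normal forms $\partial_{k_1,\varepsilon_1}\cdots\partial_{k_t,\varepsilon_t}$, $k_1>\dots>k_t$. A marked cubical set is a cubical set with marked cubes of positive dimension containing all degenerate cubes. $\tau_jX$ is $X$ with all cubes of dimension $\ge j+1$ marked. $\square^n_{k,\varepsilon}$ ($n\ge1$, $1\le k\le n$) is $\square^n$ in which a non-degenerate positive-dimensional face in normal form is marked iff none of its factors is $\partial_{k-1,\varepsilon},\partial_{k,0},\partial_{k,1},\partial_{k+1,\varepsilon}$; $\sqcap^n_{k,\varepsilon}$ is the union of codimension-one faces except $\partial_{k,\varepsilon}$, regularly marked; for $n\ge2$, $(\square^n_{k,\varepsilon})''=\tau_{n-2}\square^n_{k,\varepsilon}$ and $(\square^n_{k,\varepsilon})'$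 is $\square^n_{k,\varepsilon}$ with all $(n-1)$-faces other than $\partial_{k,\varepsilon}$ marked. A comical set is a marked cubical set with the right lifting property against all $\sqcap^n_{k,\varepsilon}\hookrightarrow\square^n_{k,\varepsilon}$ and $(\square^n_{k,\varepsilon})'\hookrightarrow(\square^n_{k,\varepsilon})''$. A $1$-cube $f$ goes from $x=f\partial_{1,0}$ to $y=f\partial_{1,1}$. Write a $2$-cube $s$ via its faces $(s\partial_{1,0},s\partial_{1,1},s\partial_{2,0},s\partial_{2,1})$. For $1$-cubes $f,g$ from $x$ to $y$, $f\sim g$ (homotopic) means there is a marked $2$-cube with faces $(g,y\sigma_1,f,y\sigma_1)$; in a comical set this is an equivalence relation, and $[f]$ denotes the class. Given $f$ from $x$ to $y$ and $g$ from $y$ to $z$, a composite of $f$ and $g$ is a $1$-cube $a$, $b$, $c$ or $d$ for which there exists a marked $2$-cube with faces $(a,g,f,z\sigma_1)$, $(f,b,x\sigma_1,g)$, $(f,z\sigma_1,c,g)$ or $(x\sigma_1,g,f,d)$ respectively; in a comical set such composites exist. *)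

theory Defs
  imports Main
begin

text \<open>Cubes of the standard cube are bit vectors, represented as bool lists of fixed
length (False = 0, True = 1).  A morphism [1]^m -> [1]^n is represented by a function on
bool lists, canonicalised to be [] outside lists of length m.\<close>

definition canon :: "nat \<Rightarrow> (bool list \<Rightarrow> bool list) \<Rightarrow> (bool list \<Rightarrow> bool list)" where
  "canon m f = (\<lambda>v. if length v = m then f v else [])"

text \<open>face map \<partial>_{i,e}: insert e as i-th coordinate (1-based)\<close>
definition face_fun :: "nat \<Rightarrow> bool \<Rightarrow> bool list \<Rightarrow> bool list" where
  "face_fun i e v = take (i - 1) v @ e # drop (i - 1) v"

definition degen_fun :: "nat \<Rightarrow> bool list \<Rightarrow> bool list" where
  "degen_fun i v = take (i - 1) v @ drop i v"

definition conn_fun :: "nat \<Rightarrow> bool \<Rightarrow> bool list \<Rightarrow> bool list" where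
  "conn_fun i e v = take (i - 1) v
      @ (if e then (v ! (i - 1) \<or> v ! i) else (v ! (i - 1) \<and> v ! i)) # drop (i + 1) v"

inductive raw_box :: "nat \<Rightarrow> nat \<Rightarrow> (bool list \<Rightarrow> bool list) \<Rightarrow> bool" where
  rb_id: "raw_box n n id"
| rb_face: "1 \<le> i \<Longrightarrow> i \<le> Suc m \<Longrightarrow> raw_box m (Suc m) (face_fun i e)"
| rb_degen: "1 \<le> i \<Longrightarrow> i \<le> Suc m \<Longrightarrow> raw_box (Suc m) m (degen_fun i)"
| rb_conn: "1 \<le> i \<Longrightarrow> i \<le> Suc m \<Longrightarrow> raw_box (Suc (Suc m)) (Suc m) (conn_fun i e)"
| rb_comp: "raw_box m n f \<Longrightarrow> raw_box k m g \<Longrightarrow> raw_box k n (f \<circ> g)"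

definition box_hom :: "nat \<Rightarrow> nat \<Rightarrow> (bool list \<Rightarrow> bool list) set" where
  "box_hom m n = canon m ` {f. raw_box m n f}"

text \<open>A cubical set (presheaf on the box category) with a marking: cells n = the n-cubes,
act x m \<phi> = x\<phi> (right action) for x an n-cube and \<phi> : [1]^m -> [1]^n,
marked n = the marked n-cubes.\<close>

record 'c mcset =
  cells :: "nat \<Rightarrow> 'c set"
  act :: "'c \<Rightarrow> nat \<Rightarrow> (bool list \<Rightarrow> bool list) \<Rightarrow> 'c"
  marked :: "nat \<Rightarrow> 'c set"

definition cubical_set :: "('c, 'z) mcset_scheme \<Rightarrow> bool" where
  "cubical_set X \<longleftrightarrow>
     (\<forall>n m x \<phi>. x \<in> cells X n \<longrightarrow> \<phi> \<in> box_hom m n \<longrightarrow> act X x m \<phi> \<in> cells X m) \<and>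
     (\<forall>n x. x \<in> cells X n \<longrightarrow> act X x n (canon n id) = x) \<and>
     (\<forall>n m k x \<phi> \<psi>. x \<in> cells X n \<longrightarrow> \<phi> \<in> box_hom m n \<longrightarrow> \<psi> \<in> box_hom k m \<longrightarrow>
         act X (act X x m \<phi>) k \<psi> = act X x k (canon k (\<phi> \<circ> \<psi>)))"

definition degenerate :: "('c, 'z) mcset_scheme \<Rightarrow> nat \<Rightarrow> 'c \<Rightarrow> bool" where
  "degenerate X n x \<longleftrightarrow>
     (\<exists>m y i. n = Suc m \<and> y \<in> cells X m \<and> 1 \<le> i \<and> i \<le> Suc m \<and>
        x = act X y n (canon n (degen_fun i))) \<or>
     (\<exists>m y i e. n = Suc (Suc m) \<and> y \<in> cells X (Suc m) \<and> 1 \<le> i \<and> i \<le> Suc m \<and>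
        x = act X y n (canon n (conn_fun i e)))"

definition marked_cset :: "('c, 'z) mcset_scheme \<Rightarrow> bool" where
  "marked_cset X \<longleftrightarrow> cubical_set X \<and> marked X 0 = {} \<and>
     (\<forall>n. marked X n \<subseteq> cells X n) \<and>
     (\<forall>n x. x \<in> cells X n \<longrightarrow> degenerate X n x \<longrightarrow> x \<in> marked X n)"

definition mmap :: "('a, 'y) mcset_scheme \<Rightarrow> ('c, 'z) mcset_scheme \<Rightarrow> (nat \<Rightarrow> 'a \<Rightarrow> 'c) \<Rightarrow> bool" where
  "mmap A X F \<longleftrightarrow>
     (\<forall>n a. a \<in> cells A n \<longrightarrow> F n a \<in> cells X n) \<and>
     (\<forall>n m a \<phi>. a \<in> cells A n \<longrightarrow> \<phi> \<in> box_hom m n \<longrightarrow> F m (act A a m \<phi>) = act X (F n a) m \<phi>) \<and>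
     (\<forall>n a. a \<in> marked A n \<longrightarrow> F n a \<in> marked X n)"

text \<open>Right lifting property of X against the inclusion A \<hookrightarrow> B (A a marked sub-object of B):
every map A -> X extends along the inclusion to a map B -> X.\<close>
definition rlp :: "('a, 'y) mcset_scheme \<Rightarrow> ('a, 'y) mcset_scheme \<Rightarrow> ('c, 'z) mcset_scheme \<Rightarrow> bool" where
  "rlp A B X \<longleftrightarrow> (\<forall>F. mmap A X F \<longrightarrow>
     (\<exists>G. mmap B X G \<and> (\<forall>n a. a \<in> cells A n \<longrightarrow> G n a = F n a)))"

definition std_cube :: "nat \<Rightarrow> (bool list \<Rightarrow> bool list) mcset" where
  "std_cube n = \<lparr>cells = (\<lambda>m. box_hom m n), act = (\<lambda>\<phi> m \<psi>. canon m (\<phi> \<circ> \<psi>)),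
                 marked = (\<lambda>m. {})\<rparr>"

definition face_comp :: "(nat \<times> bool) list \<Rightarrow> bool list \<Rightarrow> bool list" where
  "face_comp l = foldr (\<lambda>(i, e) f. face_fun i e \<circ> f) l id"

text \<open>normal form of a composite of faces into [1]^n: strictly decreasing indices\<close>
definition face_nf :: "nat \<Rightarrow> (nat \<times> bool) list \<Rightarrow> bool" where
  "face_nf n l \<longleftrightarrow> sorted_wrt (\<lambda>a b. fst a > fst b) l \<and> length l \<le> n \<and>
     (\<forall>p \<in> set l. 1 \<le> fst p \<and> fst p \<le> n)"

definition bad_factors :: "nat \<Rightarrow> bool \<Rightarrow> (nat \<times> bool) set" where
  "bad_factors k e = {(k - 1, e), (k, False), (k, True), (k + 1, e)}"

definition box_marking :: "nat \<Rightarrow> nat \<Rightarrow> bool \<Rightarrow> nat \<Rightarrow> (bool list \<Rightarrow> bool list) set" where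
  "box_marking n k e m = {\<phi> \<in> box_hom m n. 1 \<le> m \<and>
      (degenerate (std_cube n) m \<phi> \<or>
       (\<exists>l. face_nf n l \<and> length l = n - m \<and> \<phi> = canon m (face_comp l) \<and> set l \<inter> bad_factors k e = {}))}"

definition box_ke :: "nat \<Rightarrow> nat \<Rightarrow> bool \<Rightarrow> (bool list \<Rightarrow> bool list) mcset" where
  "box_ke n k e = (std_cube n)\<lparr>marked := box_marking n k e\<rparr>"

definition horn_cells :: "nat \<Rightarrow> nat \<Rightarrow> bool \<Rightarrow> nat \<Rightarrow> (bool list \<Rightarrow> bool list) set" where
  "horn_cells n k e m = {canon m (canon (n - 1) (face_fun i d) \<circ> \<psi>) | i d \<psi>.
      1 \<le> i \<and> i \<le> n \<and> (i, d) \<noteq> (k, e) \<and> \<psi> \<in> box_hom m (n - 1)}"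

definition horn :: "nat \<Rightarrow> nat \<Rightarrow> bool \<Rightarrow> (bool list \<Rightarrow> bool list) mcset" where
  "horn n k e = \<lparr>cells = horn_cells n k e, act = (\<lambda>\<phi> m \<psi>. canon m (\<phi> \<circ> \<psi>)),
                 marked = (\<lambda>m. box_marking n k e m \<inter> horn_cells n k e m)\<rparr>"

definition box_ke' :: "nat \<Rightarrow> nat \<Rightarrow> bool \<Rightarrow> (bool list \<Rightarrow> bool list) mcset" where
  "box_ke' n k e = (std_cube n)\<lparr>marked := (\<lambda>m. box_marking n k e m \<union>
      (if m = n - 1 then {canon (n - 1) (face_fun i d) | i d. 1 \<le> i \<and> i \<le> n \<and> (i, d) \<noteq> (k, e)}
       else {}))\<rparr>"

definition box_ke'' :: "nat \<Rightarrow> nat \<Rightarrow> bool \<Rightarrow> (bool list \<Rightarrow> bool list) mcset" where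
  "box_ke'' n k e = (std_cube n)\<lparr>marked := (\<lambda>m. box_marking n k e m \<union>
      (if n - 1 \<le> m then box_hom m n else {}))\<rparr>"

definition comical :: "('c, 'z) mcset_scheme \<Rightarrow> bool" where
  "comical X \<longleftrightarrow> marked_cset X \<and>
     (\<forall>n k e. 1 \<le> n \<longrightarrow> 1 \<le> k \<longrightarrow> k \<le> n \<longrightarrow> rlp (horn n k e) (box_ke n k e) X) \<and>
     (\<forall>n k e. 2 \<le> n \<longrightarrow> 1 \<le> k \<longrightarrow> k \<le> n \<longrightarrow> rlp (box_ke' n k e) (box_ke'' n k e) X)"

definition fc :: "('c, 'z) mcset_scheme \<Rightarrow> nat \<Rightarrow> 'c \<Rightarrow> nat \<Rightarrow> bool \<Rightarrow> 'c" where
  "fc X n x i e = act X x (n - 1) (canon (n - 1) (face_fun i e))"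

definition sig1 :: "('c, 'z) mcset_scheme \<Rightarrow> 'c \<Rightarrow> 'c" where
  "sig1 X x = act X x 1 (canon 1 (degen_fun 1))"

definition hom1 :: "('c, 'z) mcset_scheme \<Rightarrow> 'c \<Rightarrow> 'c \<Rightarrow> 'c \<Rightarrow> bool" where
  "hom1 X x y f \<longleftrightarrow> f \<in> cells X 1 \<and> fc X 1 f 1 False = x \<and> fc X 1 f 1 True = y"

definition msq :: "('c, 'z) mcset_scheme \<Rightarrow> 'c \<Rightarrow> 'c \<Rightarrow> 'c \<Rightarrow> 'c \<Rightarrow> 'c \<Rightarrow> bool" where
  "msq X s a b c d \<longleftrightarrow> s \<in> marked X 2 \<and>
     fc X 2 s 1 False = a \<and> fc X 2 s 1 True = b \<and> fc X 2 s 2 False = c \<and> fc X 2 s 2 True = d"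

definition htpy :: "('c, 'z) mcset_scheme \<Rightarrow> 'c \<Rightarrow> 'c \<Rightarrow> 'c \<Rightarrow> 'c \<Rightarrow> bool" where
  "htpy X x y f g \<longleftrightarrow> hom1 X x y f \<and> hom1 X x y g \<and>
     (\<exists>s. msq X s g (sig1 X y) f (sig1 X y))"

definition composite :: "('c, 'z) mcset_scheme \<Rightarrow> 'c \<Rightarrow> 'c \<Rightarrow> 'c \<Rightarrow> 'c \<Rightarrow> 'c \<Rightarrow> 'c \<Rightarrow> bool" where
  "composite X x y z f g a \<longleftrightarrow> hom1 X x y f \<and> hom1 X y z g \<and>
     ((\<exists>s. msq X s a g f (sig1 X z)) \<or>
      (\<exists>s. msq X s f a (sig1 X x) g) \<or>
      (\<exists>s. msq X s f (sig1 X z) a g) \<or>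
      (\<exists>s. msq X s (sig1 X x) g f a))"

end

theory Submission
  imports Defs
begin

text \<open>Composites exist by filling the open box \<sqcap>^2_{1,0}. Every other property comes from a single
  three-dimensional open box: its five faces are the marked squares witnessing the hypotheses, together
  with degenerate squares f\<sigma>_1, f\<sigma>_2, f\<gamma>_{1,1} and z\<sigma>_1\<sigma>_1; filling it (first lifting
  property) and marking its missing face (second lifting property) yields the marked square witnessing
  the conclusion. It suffices to work with composites of the first kind, since any two of them for the
  same pair are homotopic and the other three kinds reduce to it by such a cube.\<close>

section \<open>Face, degeneracy and connection maps on bit vectors\<close>

lemma length_face_fun [simp]: "length (face_fun i e v) = Suc (length v)"
  by (simp add: face_fun_def)

lemma length_degen_fun:
  "1 \<le> i \<Longrightarrow> i \<le> length v \<Longrightarrow> length (degen_fun i v) = length v - 1"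
  by (simp add: degen_fun_def)

lemma length_conn_fun:
  "1 \<le> i \<Longrightarrow> i < length v \<Longrightarrow> length (conn_fun i e v) = length v - 1"
  by (simp add: conn_fun_def)

lemma nth_face_fun:
  "i - 1 \<le> length v \<Longrightarrow> p \<le> length v \<Longrightarrow>
   face_fun i e v ! p = (if p < i - 1 then v ! p else if p = i - 1 then e else v ! (p - 1))"
  by (auto simp: face_fun_def nth_append min_def nth_Cons')

lemma nth_degen_fun:
  "1 \<le> i \<Longrightarrow> i \<le> length v \<Longrightarrow> p < length v - 1 \<Longrightarrow>
   degen_fun i v ! p = (if p < i - 1 then v ! p else v ! Suc p)"
  by (auto simp: degen_fun_def nth_append min_def)

lemma face_fun_degen_fun:
  assumes "1 \<le> i" "i \<le> length v" "v ! (i - 1) = e"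
  shows "face_fun i e (degen_fun i v) = v"
  using assms id_take_nth_drop[of "i - 1" v]
  by (simp add: face_fun_def degen_fun_def)

lemma degen_fun_face_fun: "1 \<le> i \<Longrightarrow> i - 1 \<le> length v \<Longrightarrow> degen_fun i (face_fun i e v) = v"
  by (cases i) (auto simp: face_fun_def degen_fun_def)

lemma degen_fun_degen_fun:
  assumes "1 \<le> i" "i < j" "j \<le> length v"
  shows "degen_fun (j - 1) (degen_fun i v) = degen_fun i (degen_fun j v)"
proof -
  obtain a b where "i = Suc a" "j = Suc (Suc b)" "a \<le> b"
    using assms by (metis Suc_le_D Suc_le_mono less_eq_Suc_le not0_implies_Suc not_one_le_zero)
  then show ?thesis using assms(3)
    by (simp add: degen_fun_def drop_take min_def)
qed

lemma face_fun_face_fun: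
  assumes "1 \<le> i" "i < j" "j - 2 \<le> length v"
  shows "face_fun i d (face_fun (j - 1) d' v) = face_fun j d' (face_fun i d v)"
proof -
  obtain a b where "i = Suc a" "j = Suc (Suc b)" "a \<le> b"
    using assms by (metis Suc_le_D Suc_le_mono less_eq_Suc_le not0_implies_Suc not_one_le_zero)
  then show ?thesis using assms(3)
    by (simp add: face_fun_def drop_take min_def Suc_diff_le)
qed

lemma raw_box_length: "raw_box m n f \<Longrightarrow> length v = m \<Longrightarrow> length (f v) = n"
  by (induction arbitrary: v rule: raw_box.induct) (auto simp: length_degen_fun length_conn_fun)

lemma length_face_comp: "length (face_comp l v) = length v + length l"
  by (induction l) (auto simp: face_comp_def)

section \<open>Morphisms of the box category and cubical sets\<close>

lemma canon_eqI: "(\<And>v. length v = m \<Longrightarrow> f v = g v) \<Longrightarrow> canon m f = canon m g"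
  by (auto simp: canon_def)

lemma canon_comp_canon: "canon k (f \<circ> canon k g) = canon k (f \<circ> g)"
  by (rule canon_eqI) (auto simp: canon_def)

lemma box_hom_canon: "\<phi> \<in> box_hom m n \<Longrightarrow> canon m \<phi> = \<phi>"
  by (auto simp: box_hom_def canon_def)

lemma box_hom_length: "\<phi> \<in> box_hom m n \<Longrightarrow> length v = m \<Longrightarrow> length (\<phi> v) = n"
  by (auto simp: box_hom_def canon_def raw_box_length)

lemma canon_comp_box_hom: "\<psi> \<in> box_hom k m \<Longrightarrow> canon k (canon m f \<circ> \<psi>) = canon k (f \<circ> \<psi>)"
  by (rule canon_eqI) (auto simp: canon_def box_hom_length)

lemma canon_in_box_hom: "raw_box m n f \<Longrightarrow> canon m f \<in> box_hom m n"
  by (auto simp: box_hom_def)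

lemma box_hom_comp:
  assumes "\<phi> \<in> box_hom m n" "\<psi> \<in> box_hom k m"
  shows "canon k (\<phi> \<circ> \<psi>) \<in> box_hom k n"
proof -
  obtain f where f: "raw_box m n f" "\<phi> = canon m f" using assms(1) by (auto simp: box_hom_def)
  obtain g where g: "raw_box k m g" "\<psi> = canon k g" using assms(2) by (auto simp: box_hom_def)
  have "canon k (\<phi> \<circ> \<psi>) = canon k (f \<circ> g)"
    by (rule canon_eqI) (simp add: f(2) g(2) canon_def raw_box_length[OF g(1)])
  then show ?thesis using f(1) g(1) by (simp add: canon_in_box_hom rb_comp)
qed

lemma face_comp_in_box_hom_length: "canon m (face_comp l) \<in> box_hom m n \<Longrightarrow> m + length l = n"
  using box_hom_length[of "canon m (face_comp l)" m n "replicate m False"]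
  by (simp add: canon_def length_face_comp)

lemma id_in_box_hom: "canon n id \<in> box_hom n n"
  by (rule canon_in_box_hom) (rule rb_id)

lemma face_in_box_hom: "1 \<le> i \<Longrightarrow> i \<le> Suc n \<Longrightarrow> canon n (face_fun i e) \<in> box_hom n (Suc n)"
  by (rule canon_in_box_hom) (rule rb_face)

lemma face_in_box_hom': "1 \<le> i \<Longrightarrow> i \<le> n \<Longrightarrow> canon (n - 1) (face_fun i e) \<in> box_hom (n - 1) n"
  using face_in_box_hom[of i "n - 1" e] by simp

lemma degen_in_box_hom: "1 \<le> i \<Longrightarrow> i \<le> Suc n \<Longrightarrow> canon (Suc n) (degen_fun i) \<in> box_hom (Suc n) n"
  by (rule canon_in_box_hom) (rule rb_degen)

lemma degen_comp_in_box_hom: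
  assumes "\<phi> \<in> box_hom m n" "1 \<le> i" "i \<le> n"
  shows "canon m (degen_fun i \<circ> \<phi>) \<in> box_hom m (n - 1)"
proof -
  have "canon n (degen_fun i) \<in> box_hom n (n - 1)"
    using degen_in_box_hom[of i "n - 1"] assms(2,3) by simp
  from box_hom_comp[OF this assms(1)] show ?thesis by (simp add: canon_comp_box_hom assms(1))
qed

lemma conn_in_box_hom:
  "1 \<le> i \<Longrightarrow> i \<le> Suc n \<Longrightarrow> canon (Suc (Suc n)) (conn_fun i e) \<in> box_hom (Suc (Suc n)) (Suc n)"
  by (rule canon_in_box_hom) (rule rb_conn)

lemma degenerate_std_cube_comp:
  assumes "degenerate (std_cube n) m \<phi>" and \<psi>: "\<psi> \<in> box_hom n n'"
  shows "degenerate (std_cube n') m (canon m (\<psi> \<circ> \<phi>))"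
  using assms(1)[unfolded degenerate_def]
proof (elim disjE exE conjE)
  fix m' y i assume m: "m = Suc m'" and y: "y \<in> cells (std_cube n) m'" and i: "1 \<le> i" "i \<le> Suc m'"
    and \<phi>y: "\<phi> = act (std_cube n) y m (canon m (degen_fun i))"
  let ?y = "canon m' (\<psi> \<circ> y)"
  have "?y \<in> cells (std_cube n') m'" using box_hom_comp[OF \<psi>] y by (simp add: std_cube_def)
  moreover have "canon m (\<psi> \<circ> \<phi>) = act (std_cube n') ?y m (canon m (degen_fun i))"
    using \<phi>y m i unfolding std_cube_def
    by (simp, intro canon_eqI) (simp add: canon_def length_degen_fun)
  ultimately show ?thesis unfolding degenerate_def using m i by blast
next
  fix m' y i e assume m: "m = Suc (Suc m')" and y: "y \<in> cells (std_cube n) (Suc m')"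
    and i: "1 \<le> i" "i \<le> Suc m'" and \<phi>y: "\<phi> = act (std_cube n) y m (canon m (conn_fun i e))"
  let ?y = "canon (Suc m') (\<psi> \<circ> y)"
  have "?y \<in> cells (std_cube n') (Suc m')" using box_hom_comp[OF \<psi>] y by (simp add: std_cube_def)
  moreover have "canon m (\<psi> \<circ> \<phi>) = act (std_cube n') ?y m (canon m (conn_fun i e))"
    using \<phi>y m i unfolding std_cube_def
    by (simp, intro canon_eqI) (simp add: canon_def length_conn_fun)
  ultimately show ?thesis unfolding degenerate_def using m i
    by (intro disjI2 exI[of _ m'] exI[of _ ?y] exI[of _ i] exI[of _ e]) simp
qed

lemma degenerate_in_marked: "marked_cset X \<Longrightarrow> x \<in> cells X n \<Longrightarrow> degenerate X n x \<Longrightarrow> x \<in> marked X n"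
  by (simp add: marked_cset_def)

context
  fixes X :: "('c, 'z) mcset_scheme"
  assumes cs: "cubical_set X"
begin

lemma act_in_cells: "x \<in> cells X n \<Longrightarrow> \<phi> \<in> box_hom m n \<Longrightarrow> act X x m \<phi> \<in> cells X m"
  using cs by (auto simp: cubical_set_def)

lemma act_id: "x \<in> cells X n \<Longrightarrow> act X x n (canon n id) = x"
  using cs by (auto simp: cubical_set_def)

lemma act_act: "x \<in> cells X n \<Longrightarrow> \<phi> \<in> box_hom m n \<Longrightarrow> \<psi> \<in> box_hom k m \<Longrightarrow>
   act X (act X x m \<phi>) k \<psi> = act X x k (canon k (\<phi> \<circ> \<psi>))"
  using cs unfolding cubical_set_def by blast

lemma act_degenerate:
  assumes x: "x \<in> cells X n" and \<phi>: "degenerate (std_cube n) m \<phi>"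
  shows "degenerate X m (act X x m \<phi>)"
  using \<phi>[unfolded degenerate_def]
proof (elim disjE exE conjE)
  fix m' y i assume m: "m = Suc m'" and y: "y \<in> cells (std_cube n) m'" and i: "1 \<le> i" "i \<le> Suc m'"
    and \<phi>y: "\<phi> = act (std_cube n) y m (canon m (degen_fun i))"
  have "act X x m \<phi> = act X (act X x m' y) m (canon m (degen_fun i))"
    using act_act[OF x _ degen_in_box_hom[OF i]] y m \<phi>y by (simp add: std_cube_def)
  moreover have "act X x m' y \<in> cells X m'" using act_in_cells[OF x] y by (simp add: std_cube_def)
  ultimately show ?thesis unfolding degenerate_def using m i by blast
next
  fix m' y i e assume m: "m = Suc (Suc m')" and y: "y \<in> cells (std_cube n) (Suc m')"
    and i: "1 \<le> i" "i \<le> Suc m'" and \<phi>y: "\<phi> = act (std_cube n) y m (canon m (conn_fun i e))"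
  have "act X x m \<phi> = act X (act X x (Suc m') y) m (canon m (conn_fun i e))"
    using act_act[OF x _ conn_in_box_hom[OF i]] y m \<phi>y by (simp add: std_cube_def)
  moreover have "act X x (Suc m') y \<in> cells X (Suc m')"
    using act_in_cells[OF x] y by (simp add: std_cube_def)
  ultimately show ?thesis unfolding degenerate_def using m i
    by (intro disjI2 exI[of _ m'] exI[of _ "act X x (Suc m') y"] exI[of _ i] exI[of _ e]) simp
qed

lemma fc_in_cells: "s \<in> cells X (Suc m) \<Longrightarrow> 1 \<le> i \<Longrightarrow> i \<le> Suc m \<Longrightarrow> fc X (Suc m) s i d \<in> cells X m"
  unfolding fc_def using act_in_cells[OF _ face_in_box_hom[of i m d]] by simp

lemma fc_fc:
  assumes x: "x \<in> cells X (Suc (Suc m))" and ij: "1 \<le> i" "i < j" "j \<le> Suc (Suc m)"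
  shows "fc X (Suc m) (fc X (Suc (Suc m)) x i d) (j - 1) d' =
         fc X (Suc m) (fc X (Suc (Suc m)) x j d') i d"
proof -
  have "canon m (canon (Suc m) (face_fun i d) \<circ> canon m (face_fun (j - 1) d'))
      = canon m (canon (Suc m) (face_fun j d') \<circ> canon m (face_fun i d))"
    by (rule canon_eqI) (use face_fun_face_fun[of i j] ij in \<open>simp add: canon_def\<close>)
  moreover have "canon m (face_fun i d) \<in> box_hom m (Suc m)"
    and "canon m (face_fun (j - 1) d') \<in> box_hom m (Suc m)"
    and "canon (Suc m) (face_fun i d) \<in> box_hom (Suc m) (Suc (Suc m))"
    and "canon (Suc m) (face_fun j d') \<in> box_hom (Suc m) (Suc (Suc m))"
    using ij by (auto intro: face_in_box_hom)
  ultimately show ?thesis unfolding fc_def using x by (simp add: act_act)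
qed

end

section \<open>Filling open boxes\<close>

text \<open>A map from the open box \<sqcap>^n_{k,e} into X is given by its codimension-one faces
  c i d, (i, d) \<noteq> (k, e). A cube \<phi> of the open box lies in some face \<partial>_{i,d}, i.e. its i-th
  coordinate is constantly d; its image is then the corresponding cube of c i d, obtained by
  deleting that coordinate.\<close>

definition factors_through_face ::
    "nat \<Rightarrow> nat \<Rightarrow> bool \<Rightarrow> nat \<Rightarrow> (bool list \<Rightarrow> bool list) \<Rightarrow> nat \<Rightarrow> bool \<Rightarrow> bool" where
  "factors_through_face n k e m \<phi> i d \<longleftrightarrow>
     1 \<le> i \<and> i \<le> n \<and> (i, d) \<noteq> (k, e) \<and> (\<forall>v. length v = m \<longrightarrow> \<phi> v ! (i - 1) = d)"

definition face_value :: "('c, 'z) mcset_scheme \<Rightarrow> (nat \<Rightarrow> bool \<Rightarrow> 'c) \<Rightarrow>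
    nat \<Rightarrow> (bool list \<Rightarrow> bool list) \<Rightarrow> nat \<Rightarrow> bool \<Rightarrow> 'c" where
  "face_value X c m \<phi> i d = act X (c i d) m (canon m (degen_fun i \<circ> \<phi>))"

definition horn_map :: "('c, 'z) mcset_scheme \<Rightarrow> (nat \<Rightarrow> bool \<Rightarrow> 'c) \<Rightarrow>
    nat \<Rightarrow> nat \<Rightarrow> bool \<Rightarrow> nat \<Rightarrow> (bool list \<Rightarrow> bool list) \<Rightarrow> 'c" where
  "horn_map X c n k e m \<phi> =
     (let (i, d) = SOME (i, d). factors_through_face n k e m \<phi> i d in face_value X c m \<phi> i d)"

lemma horn_cells_factors_through_face:
  assumes "\<phi> \<in> horn_cells n k e m"
  shows "\<phi> \<in> box_hom m n \<and> (\<exists>i d. factors_through_face n k e m \<phi> i d)"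
proof -
  obtain i d \<psi> where \<phi>: "\<phi> = canon m (canon (n - 1) (face_fun i d) \<circ> \<psi>)" and i: "1 \<le> i" "i \<le> n"
    and ik: "(i, d) \<noteq> (k, e)" and \<psi>: "\<psi> \<in> box_hom m (n - 1)"
    using assms unfolding horn_cells_def by blast
  have "\<phi> \<in> box_hom m n" unfolding \<phi> using box_hom_comp[OF face_in_box_hom'[OF i] \<psi>] .
  moreover have "factors_through_face n k e m \<phi> i d"
    unfolding factors_through_face_def using \<phi> i ik box_hom_length[OF \<psi>]
    by (auto simp: canon_def nth_face_fun)
  ultimately show ?thesis by blast
qed

lemma horn_cellsI:
  assumes \<phi>: "\<phi> \<in> box_hom m n" and "factors_through_face n k e m \<phi> i d"
  shows "\<phi> \<in> horn_cells n k e m"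
proof -
  have i: "1 \<le> i" "i \<le> n" "(i, d) \<noteq> (k, e)" and \<phi>i: "\<And>v. length v = m \<Longrightarrow> \<phi> v ! (i - 1) = d"
    using assms(2) by (auto simp: factors_through_face_def)
  have "\<phi> = canon m (canon (n - 1) (face_fun i d) \<circ> canon m (degen_fun i \<circ> \<phi>))"
  proof (subst box_hom_canon[OF \<phi>, symmetric], rule canon_eqI)
    fix v :: "bool list" assume v: "length v = m"
    then show "\<phi> v = (canon (n - 1) (face_fun i d) \<circ> canon m (degen_fun i \<circ> \<phi>)) v"
      using i box_hom_length[OF \<phi> v] \<phi>i[OF v]
      by (simp add: canon_def length_degen_fun face_fun_degen_fun)
  qed
  then show ?thesis unfolding horn_cells_def using i degen_comp_in_box_hom[OF \<phi> i(1,2)] by blast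
qed

text \<open>The two candidate values of a cube lying in two faces \<partial>_{i,d} and \<partial>_{j,d'} agree because
  both are the corresponding cube of the common face of c i d and c j d'.\<close>

lemma face_value_agree:
  assumes cs: "cubical_set X"
    and cells: "c i d \<in> cells X (Suc n)" "c j d' \<in> cells X (Suc n)"
    and compat: "fc X (Suc n) (c i d) (j - 1) d' = fc X (Suc n) (c j d') i d"
    and \<phi>: "\<phi> \<in> box_hom m (Suc (Suc n))"
    and ij: "1 \<le> i" "i < j" "j \<le> Suc (Suc n)"
    and \<phi>i: "\<And>v. length v = m \<Longrightarrow> \<phi> v ! (i - 1) = d"
    and \<phi>j: "\<And>v. length v = m \<Longrightarrow> \<phi> v ! (j - 1) = d'"
  shows "face_value X c m \<phi> i d = face_value X c m \<phi> j d'"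
proof -
  define \<rho> where "\<rho> = canon m (degen_fun (j - 1) \<circ> degen_fun i \<circ> \<phi>)"
  have "canon m (degen_fun (j - 1) \<circ> canon m (degen_fun i \<circ> \<phi>)) \<in> box_hom m n"
    using degen_comp_in_box_hom[OF degen_comp_in_box_hom[OF \<phi>, of i], of "j - 1"] ij by simp
  then have \<rho>: "\<rho> \<in> box_hom m n" unfolding \<rho>_def canon_comp_canon by (simp add: comp_assoc)
  have \<rho>i: "canon m (degen_fun i \<circ> \<phi>) = canon m (canon n (face_fun (j - 1) d') \<circ> \<rho>)"
  proof (rule canon_eqI)
    fix v :: "bool list" assume v: "length v = m"
    let ?w = "\<phi> v"
    have lw: "length ?w = Suc (Suc n)" using box_hom_length[OF \<phi> v] .
    have "Suc (j - 2) = j - 1" "\<not> j - 2 < i - 1" "j - 2 < length ?w - 1" using lw ij by auto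
    then have "degen_fun i ?w ! (j - 2) = d'" using nth_degen_fun[of i ?w "j - 2"] lw ij \<phi>j[OF v] by simp
    then show "(degen_fun i \<circ> \<phi>) v = (canon n (face_fun (j - 1) d') \<circ> \<rho>) v"
      using v lw ij face_fun_degen_fun[of "j - 1" "degen_fun i ?w" d']
      by (simp add: \<rho>_def canon_def length_degen_fun numeral_2_eq_2)
  qed
  have \<rho>j: "canon m (degen_fun j \<circ> \<phi>) = canon m (canon n (face_fun i d) \<circ> \<rho>)"
  proof (rule canon_eqI)
    fix v :: "bool list" assume v: "length v = m"
    let ?w = "\<phi> v"
    have lw: "length ?w = Suc (Suc n)" using box_hom_length[OF \<phi> v] .
    have "i - 1 < j - 1" "i - 1 < length ?w - 1" using lw ij by auto
    then have "degen_fun j ?w ! (i - 1) = d" using nth_degen_fun[of j ?w "i - 1"] lw ij \<phi>i[OF v] by simp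
    then show "(degen_fun j \<circ> \<phi>) v = (canon n (face_fun i d) \<circ> \<rho>) v"
      using v lw ij face_fun_degen_fun[of i "degen_fun j ?w" d] degen_fun_degen_fun[of i j ?w]
      by (simp add: \<rho>_def canon_def length_degen_fun)
  qed
  have "face_value X c m \<phi> i d = act X (fc X (Suc n) (c i d) (j - 1) d') m \<rho>"
    unfolding face_value_def fc_def \<rho>i using ij act_act[OF cs cells(1) face_in_box_hom \<rho>] by simp
  also have "\<dots> = act X (fc X (Suc n) (c j d') i d) m \<rho>" using compat by simp
  also have "\<dots> = face_value X c m \<phi> j d'"
    unfolding face_value_def fc_def \<rho>j using ij act_act[OF cs cells(2) face_in_box_hom \<rho>] by simp
  finally show ?thesis .
qed

context
  fixes X :: "('c, 'z) mcset_scheme" and c :: "nat \<Rightarrow> bool \<Rightarrow> 'c" and n k :: nat and e :: bool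
  assumes cs: "cubical_set X"
    and box_cells: "\<And>i d. 1 \<le> i \<Longrightarrow> i \<le> n \<Longrightarrow> (i, d) \<noteq> (k, e) \<Longrightarrow> c i d \<in> cells X (n - 1)"
    and box_compat: "\<And>i j d d'. 1 \<le> i \<Longrightarrow> i < j \<Longrightarrow> j \<le> n \<Longrightarrow> (i, d) \<noteq> (k, e) \<Longrightarrow> (j, d') \<noteq> (k, e) \<Longrightarrow>
        fc X (n - 1) (c i d) (j - 1) d' = fc X (n - 1) (c j d') i d"
begin

lemma face_value_unique:
  assumes \<phi>: "\<phi> \<in> box_hom m n"
    and "factors_through_face n k e m \<phi> i d" "factors_through_face n k e m \<phi> j d'"
  shows "face_value X c m \<phi> i d = face_value X c m \<phi> j d'"
proof -
  have ordered: "face_value X c m \<phi> i d = face_value X c m \<phi> j d'"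
    if ij: "i < j" and "factors_through_face n k e m \<phi> i d" "factors_through_face n k e m \<phi> j d'"
    for i j d d'
  proof -
    have i: "1 \<le> i" "(i, d) \<noteq> (k, e)" and j: "j \<le> n" "(j, d') \<noteq> (k, e)"
      and \<phi>i: "\<And>v. length v = m \<Longrightarrow> \<phi> v ! (i - 1) = d"
      and \<phi>j: "\<And>v. length v = m \<Longrightarrow> \<phi> v ! (j - 1) = d'"
      using that unfolding factors_through_face_def by blast+
    define n' where "n' = n - 2"
    have n: "n = Suc (Suc n')" using i j ij unfolding n'_def by linarith
    show ?thesis
    proof (rule face_value_agree[OF cs _ _ _ _ _ _ _ \<phi>i \<phi>j])
      show "c i d \<in> cells X (Suc n')" "c j d' \<in> cells X (Suc n')"
        using box_cells i j ij n by auto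
      show "fc X (Suc n') (c i d) (j - 1) d' = fc X (Suc n') (c j d') i d"
        using box_compat[OF i(1) ij j(1) i(2) j(2)] n by simp
    qed (use \<phi> i(1) ij j(1) n in auto)
  qed
  show ?thesis
  proof (cases i j rule: linorder_cases)
    case less
    then show ?thesis using ordered assms(2,3) by blast
  next
    case equal
    have "\<phi> (replicate m False) ! (i - 1) = d" "\<phi> (replicate m False) ! (j - 1) = d'"
      using assms(2,3) by (auto simp: factors_through_face_def)
    then show ?thesis using equal by simp
  next
    case greater
    then show ?thesis using ordered assms(2,3) by metis
  qed
qed

lemma horn_map_eq:
  assumes "\<phi> \<in> box_hom m n" and "factors_through_face n k e m \<phi> i d"
  shows "horn_map X c n k e m \<phi> = face_value X c m \<phi> i d"
proof -
  obtain i' d' where "(SOME (i, d). factors_through_face n k e m \<phi> i d) = (i', d')" by (metis surj_pair)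
  moreover have "factors_through_face n k e m \<phi> i' d'"
    using someI[of "\<lambda>(i, d). factors_through_face n k e m \<phi> i d" "(i, d)"] assms(2) calculation by simp
  ultimately show ?thesis unfolding horn_map_def using face_value_unique[OF assms(1) _ assms(2)] by simp
qed

lemma horn_map_in_cells:
  assumes "\<phi> \<in> horn_cells n k e m"
  shows "horn_map X c n k e m \<phi> \<in> cells X m"
proof -
  obtain i d where \<phi>: "\<phi> \<in> box_hom m n" and "factors_through_face n k e m \<phi> i d"
    using horn_cells_factors_through_face[OF assms] by blast
  then have "1 \<le> i" "i \<le> n" "(i, d) \<noteq> (k, e)" "horn_map X c n k e m \<phi> = face_value X c m \<phi> i d"
    using horn_map_eq by (auto simp: factors_through_face_def)
  then show ?thesis
    unfolding face_value_def using act_in_cells[OF cs box_cells degen_comp_in_box_hom[OF \<phi>]] by simp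
qed

lemma horn_map_natural:
  assumes \<phi>: "\<phi> \<in> horn_cells n k e m" and \<chi>: "\<chi> \<in> box_hom m' m"
  shows "horn_map X c n k e m' (canon m' (\<phi> \<circ> \<chi>)) = act X (horn_map X c n k e m \<phi>) m' \<chi>"
proof -
  obtain i d where \<phi>n: "\<phi> \<in> box_hom m n" and f: "factors_through_face n k e m \<phi> i d"
    using horn_cells_factors_through_face[OF \<phi>] by blast
  have i: "1 \<le> i" "i \<le> n" "(i, d) \<noteq> (k, e)" using f by (auto simp: factors_through_face_def)
  have "factors_through_face n k e m' (canon m' (\<phi> \<circ> \<chi>)) i d"
    using f box_hom_length[OF \<chi>] by (auto simp: factors_through_face_def canon_def)
  then have "horn_map X c n k e m' (canon m' (\<phi> \<circ> \<chi>)) = face_value X c m' (canon m' (\<phi> \<circ> \<chi>)) i d"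
    by (rule horn_map_eq[OF box_hom_comp[OF \<phi>n \<chi>]])
  also have "\<dots> = act X (face_value X c m \<phi> i d) m' \<chi>"
  proof -
    have "canon m' (degen_fun i \<circ> canon m' (\<phi> \<circ> \<chi>)) = canon m' (canon m (degen_fun i \<circ> \<phi>) \<circ> \<chi>)"
      by (simp add: canon_comp_canon canon_comp_box_hom[OF \<chi>] comp_assoc)
    then show ?thesis unfolding face_value_def
      using act_act[OF cs box_cells[OF i] degen_comp_in_box_hom[OF \<phi>n i(1,2)] \<chi>] by simp
  qed
  also have "\<dots> = act X (horn_map X c n k e m \<phi>) m' \<chi>" using horn_map_eq[OF \<phi>n f] by simp
  finally show ?thesis .
qed

lemma horn_map_degenerate_marked:
  assumes mc: "marked_cset X" and \<phi>: "\<phi> \<in> horn_cells n k e m" and dg: "degenerate (std_cube n) m \<phi>"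
  shows "horn_map X c n k e m \<phi> \<in> marked X m"
proof -
  obtain i d where \<phi>n: "\<phi> \<in> box_hom m n" and f: "factors_through_face n k e m \<phi> i d"
    using horn_cells_factors_through_face[OF \<phi>] by blast
  have i: "1 \<le> i" "i \<le> n" "(i, d) \<noteq> (k, e)" using f by (auto simp: factors_through_face_def)
  have "canon n (degen_fun i) \<in> box_hom n (n - 1)" using degen_in_box_hom[of i "n - 1"] i by simp
  from degenerate_std_cube_comp[OF dg this]
  have "degenerate (std_cube (n - 1)) m (canon m (degen_fun i \<circ> \<phi>))"
    by (simp add: canon_comp_box_hom[OF \<phi>n])
  then have "degenerate X m (horn_map X c n k e m \<phi>)"
    using act_degenerate[OF cs box_cells[OF i]] horn_map_eq[OF \<phi>n f] by (simp add: face_value_def)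
  then show ?thesis using degenerate_in_marked[OF mc horn_map_in_cells[OF \<phi>]] by simp
qed

lemma horn_map_face_marked:
  assumes \<phi>: "\<phi> \<in> horn_cells n k e m" and m: "1 \<le> m"
    and l: "face_nf n l" "\<phi> = canon m (face_comp l)" "set l \<inter> bad_factors k e = {}"
    and marked_faces: "\<And>m i d t. 1 \<le> m \<Longrightarrow> face_nf n ((i, d) # t) \<Longrightarrow> m + length ((i, d) # t) = n \<Longrightarrow>
      set ((i, d) # t) \<inter> bad_factors k e = {} \<Longrightarrow> act X (c i d) m (canon m (face_comp t)) \<in> marked X m"
  shows "horn_map X c n k e m \<phi> \<in> marked X m"
proof -
  obtain i0 d0 where \<phi>n: "\<phi> \<in> box_hom m n" and f0: "factors_through_face n k e m \<phi> i0 d0"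
    using horn_cells_factors_through_face[OF \<phi>] by blast
  have \<phi>l: "\<And>v. length v = m \<Longrightarrow> \<phi> v = face_comp l v" using l(2) by (simp add: canon_def)
  have len: "m + length l = n" using face_comp_in_box_hom_length \<phi>n l(2) by simp
  show ?thesis
  proof (cases l)
    case Nil
    \<comment> \<open>the whole cube does not lie in the open box\<close>
    let ?v = "replicate m (\<not> d0)"
    have "\<phi> ?v ! (i0 - 1) = d0" "i0 - 1 < m" using f0 len Nil by (auto simp: factors_through_face_def)
    then show ?thesis using \<phi>l[of ?v] Nil by (simp add: face_comp_def)
  next
    case (Cons p t)
    obtain i d where l_eq: "l = (i, d) # t" using Cons by (cases p) simp
    have i: "1 \<le> i" "i \<le> n" using l(1) l_eq by (auto simp: face_nf_def)
    have ik: "(i, d) \<noteq> (k, e)" using l(3) l_eq by (auto simp: bad_factors_def)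
    have \<phi>t: "\<And>v. length v = m \<Longrightarrow> \<phi> v = face_fun i d (face_comp t v)"
      using \<phi>l l_eq by (simp add: face_comp_def)
    have t_len: "\<And>v. length v = m \<Longrightarrow> length (face_comp t v) = n - 1"
      using len l_eq by (simp add: length_face_comp)
    have f: "factors_through_face n k e m \<phi> i d"
      unfolding factors_through_face_def using i ik \<phi>t t_len by (auto simp: nth_face_fun)
    have "canon m (degen_fun i \<circ> \<phi>) = canon m (face_comp t)"
      by (rule canon_eqI) (use \<phi>t t_len i in \<open>simp add: degen_fun_face_fun\<close>)
    then have "horn_map X c n k e m \<phi> = act X (c i d) m (canon m (face_comp t))"
      using horn_map_eq[OF \<phi>n f] by (simp add: face_value_def)
    also have "\<dots> \<in> marked X m" using marked_faces[of m i d t] m l(1,3) len l_eq by simp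
    finally show ?thesis .
  qed
qed

lemma horn_map_mmap:
  assumes mc: "marked_cset X"
    and marked_faces: "\<And>m i d t. 1 \<le> m \<Longrightarrow> face_nf n ((i, d) # t) \<Longrightarrow> m + length ((i, d) # t) = n \<Longrightarrow>
      set ((i, d) # t) \<inter> bad_factors k e = {} \<Longrightarrow> act X (c i d) m (canon m (face_comp t)) \<in> marked X m"
  shows "mmap (horn n k e) X (horn_map X c n k e)"
  unfolding mmap_def
proof (intro conjI allI impI)
  fix m \<phi> assume "\<phi> \<in> cells (horn n k e) m"
  then show "horn_map X c n k e m \<phi> \<in> cells X m" using horn_map_in_cells by (simp add: horn_def)
next
  fix m m' \<phi> \<chi> assume "\<phi> \<in> cells (horn n k e) m" and "\<chi> \<in> box_hom m' m"
  then show "horn_map X c n k e m' (act (horn n k e) \<phi> m' \<chi>) = act X (horn_map X c n k e m \<phi>) m' \<chi>"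
    using horn_map_natural by (simp add: horn_def)
next
  fix m \<phi> assume "\<phi> \<in> marked (horn n k e) m"
  then have "\<phi> \<in> horn_cells n k e m" and "1 \<le> m" and "degenerate (std_cube n) m \<phi> \<or>
       (\<exists>l. face_nf n l \<and> \<phi> = canon m (face_comp l) \<and> set l \<inter> bad_factors k e = {})"
    by (auto simp: horn_def box_marking_def)
  then show "horn_map X c n k e m \<phi> \<in> marked X m"
    using horn_map_degenerate_marked[OF mc] horn_map_face_marked[OF _ _ _ _ _ marked_faces] by blast
qed

end

lemma comical_marked_cset: "comical X \<Longrightarrow> marked_cset X"
  by (simp add: comical_def)

lemma comical_cubical_set: "comical X \<Longrightarrow> cubical_set X"
  by (simp add: comical_def marked_cset_def)

text \<open>The premise marked_faces says that every face of the open box that is marked in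
  \<box>^n_{k,e}, i.e. a composite of face maps avoiding bad_factors k e, is sent to a marked cube.\<close>

lemma comical_horn_filler:
  assumes com: "comical X" and k: "1 \<le> k" "k \<le> n"
    and box_cells: "\<And>i d. 1 \<le> i \<Longrightarrow> i \<le> n \<Longrightarrow> (i, d) \<noteq> (k, e) \<Longrightarrow> c i d \<in> cells X (n - 1)"
    and box_compat: "\<And>i j d d'. 1 \<le> i \<Longrightarrow> i < j \<Longrightarrow> j \<le> n \<Longrightarrow> (i, d) \<noteq> (k, e) \<Longrightarrow> (j, d') \<noteq> (k, e) \<Longrightarrow>
        fc X (n - 1) (c i d) (j - 1) d' = fc X (n - 1) (c j d') i d"
    and marked_faces: "\<And>m i d t. 1 \<le> m \<Longrightarrow> face_nf n ((i, d) # t) \<Longrightarrow> m + length ((i, d) # t) = n \<Longrightarrow>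
      set ((i, d) # t) \<inter> bad_factors k e = {} \<Longrightarrow> act X (c i d) m (canon m (face_comp t)) \<in> marked X m"
  obtains u where "u \<in> marked X n" and "\<And>i d. 1 \<le> i \<Longrightarrow> i \<le> n \<Longrightarrow> (i, d) \<noteq> (k, e) \<Longrightarrow> fc X n u i d = c i d"
proof -
  note mc = comical_marked_cset[OF com] and cs = comical_cubical_set[OF com]
  have "mmap (horn n k e) X (horn_map X c n k e)"
    by (rule horn_map_mmap[OF cs box_cells box_compat mc marked_faces])
  moreover have "rlp (horn n k e) (box_ke n k e) X" using com k by (simp add: comical_def)
  ultimately obtain G where G: "mmap (box_ke n k e) X G"
    and G_horn: "\<And>m \<phi>. \<phi> \<in> horn_cells n k e m \<Longrightarrow> G m \<phi> = horn_map X c n k e m \<phi>"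
    unfolding rlp_def by (auto simp: horn_def)
  let ?u = "G n (canon n id)"
  have "canon n id \<in> box_marking n k e n"
    unfolding box_marking_def using id_in_box_hom k
    by (auto intro!: exI[of _ "[]"] simp: face_nf_def face_comp_def)
  then have "?u \<in> marked X n" using G by (auto simp: mmap_def box_ke_def std_cube_def)
  moreover have "fc X n ?u i d = c i d" if i: "1 \<le> i" "i \<le> n" "(i, d) \<noteq> (k, e)" for i d
  proof -
    let ?f = "canon (n - 1) (face_fun i d)"
    have f: "?f \<in> box_hom (n - 1) n" using face_in_box_hom'[OF i(1,2)] .
    have f_face: "factors_through_face n k e (n - 1) ?f i d"
      using i by (auto simp: factors_through_face_def canon_def nth_face_fun)
    have "fc X n ?u i d = G (n - 1) (act (box_ke n k e) (canon n id) (n - 1) ?f)"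
      using G id_in_box_hom[of n] f unfolding mmap_def fc_def by (simp add: box_ke_def std_cube_def)
    also have "act (box_ke n k e) (canon n id) (n - 1) ?f = ?f"
      unfolding box_ke_def std_cube_def by (simp, rule canon_eqI) (use i in \<open>simp add: canon_def\<close>)
    also have "G (n - 1) ?f = face_value X c (n - 1) ?f i d"
      using G_horn[OF horn_cellsI[OF f f_face]] horn_map_eq[OF cs box_cells box_compat f f_face] by simp
    also have "\<dots> = act X (c i d) (n - 1) (canon (n - 1) id)"
      unfolding face_value_def
      by (rule arg_cong[where f = "act X (c i d) (n - 1)"], rule canon_eqI)
         (use i in \<open>simp add: canon_def degen_fun_face_fun\<close>)
    also have "\<dots> = c i d" using act_id[OF cs box_cells[OF i]] .
    finally show ?thesis .
  qed
  ultimately show ?thesis using that by blast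
qed

lemma comical_box_lid_marked:
  assumes com: "comical X" and k: "2 \<le> n" "1 \<le> k" "k \<le> n" and u: "u \<in> cells X n"
    and faces: "\<And>i d. 1 \<le> i \<Longrightarrow> i \<le> n \<Longrightarrow> (i, d) \<noteq> (k, e) \<Longrightarrow> fc X n u i d \<in> marked X (n - 1)"
    and marked_faces: "\<And>m l. 1 \<le> m \<Longrightarrow> face_nf n l \<Longrightarrow> m + length l = n \<Longrightarrow> set l \<inter> bad_factors k e = {} \<Longrightarrow>
      act X u m (canon m (face_comp l)) \<in> marked X m"
  shows "fc X n u k e \<in> marked X (n - 1)"
proof -
  note mc = comical_marked_cset[OF com] and cs = comical_cubical_set[OF com]
  have "mmap (box_ke' n k e) X (\<lambda>m \<phi>. act X u m \<phi>)"
    unfolding mmap_def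
  proof (intro conjI allI impI)
    fix m \<phi> assume "\<phi> \<in> cells (box_ke' n k e) m"
    then show "act X u m \<phi> \<in> cells X m" using act_in_cells[OF cs u] by (simp add: box_ke'_def std_cube_def)
  next
    fix m m' \<phi> \<chi> assume "\<phi> \<in> cells (box_ke' n k e) m" and "\<chi> \<in> box_hom m' m"
    then show "act X u m' (act (box_ke' n k e) \<phi> m' \<chi>) = act X (act X u m \<phi>) m' \<chi>"
      using act_act[OF cs u] by (simp add: box_ke'_def std_cube_def)
  next
    fix m \<phi> assume "\<phi> \<in> marked (box_ke' n k e) m"
    then consider
        (face) i d where "m = n - 1" "\<phi> = canon (n - 1) (face_fun i d)" "1 \<le> i" "i \<le> n" "(i, d) \<noteq> (k, e)"
      | (degenerate) "\<phi> \<in> box_hom m n" "degenerate (std_cube n) m \<phi>"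
      | (inner) l where "1 \<le> m" "\<phi> \<in> box_hom m n" "face_nf n l" "\<phi> = canon m (face_comp l)"
          "set l \<inter> bad_factors k e = {}"
      by (auto simp: box_ke'_def std_cube_def box_marking_def split: if_splits)
    then show "act X u m \<phi> \<in> marked X m"
    proof cases
      case face
      then show ?thesis using faces by (simp add: fc_def)
    next
      case degenerate
      then show ?thesis
        using act_degenerate[OF cs u] degenerate_in_marked[OF mc act_in_cells[OF cs u]] by blast
    next
      case inner
      have "m + length l = n" using face_comp_in_box_hom_length inner(2,4) by simp
      then show ?thesis using marked_faces inner by blast
    qed
  qed
  moreover have "rlp (box_ke' n k e) (box_ke'' n k e) X" using com k by (simp add: comical_def)
  ultimately obtain G where G: "mmap (box_ke'' n k e) X G"
    and G_u: "\<And>m \<phi>. \<phi> \<in> box_hom m n \<Longrightarrow> G m \<phi> = act X u m \<phi>"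
    unfolding rlp_def by (auto simp: box_ke'_def std_cube_def)
  let ?f = "canon (n - 1) (face_fun k e)"
  have f: "?f \<in> box_hom (n - 1) n" using face_in_box_hom'[OF k(2,3)] .
  then have "?f \<in> marked (box_ke'' n k e) (n - 1)" by (simp add: box_ke''_def std_cube_def)
  then have "G (n - 1) ?f \<in> marked X (n - 1)" using G by (simp add: mmap_def)
  then show ?thesis using G_u[OF f] by (simp add: fc_def)
qed

section \<open>Squares and cubes\<close>

lemma comical_square_filler:
  assumes com: "comical X" and k: "1 \<le> k" "k \<le> 2"
    and cells: "\<And>i d. 1 \<le> i \<Longrightarrow> i \<le> 2 \<Longrightarrow> (i, d) \<noteq> (k, e) \<Longrightarrow> c i d \<in> cells X 1"
    and compat: "\<And>d d'. (1, d) \<noteq> (k, e) \<Longrightarrow> (2, d') \<noteq> (k, e) \<Longrightarrow> fc X 1 (c 1 d) 1 d' = fc X 1 (c 2 d') 1 d"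
    and marked_edges: "\<And>i d. 1 \<le> i \<Longrightarrow> i \<le> 2 \<Longrightarrow> (i, d) \<notin> bad_factors k e \<Longrightarrow> c i d \<in> marked X 1"
  obtains u where "u \<in> marked X 2" and "\<And>i d. 1 \<le> i \<Longrightarrow> i \<le> 2 \<Longrightarrow> (i, d) \<noteq> (k, e) \<Longrightarrow> fc X 2 u i d = c i d"
proof (rule comical_horn_filler[OF com k, where c = c])
  note cs = comical_cubical_set[OF com]
  show "c i d \<in> cells X (2 - 1)" if "1 \<le> i" "i \<le> 2" "(i, d) \<noteq> (k, e)" for i d
    using cells that by simp
  show "fc X (2 - 1) (c i d) (j - 1) d' = fc X (2 - 1) (c j d') i d"
    if "1 \<le> i" "i < j" "j \<le> 2" "(i, d) \<noteq> (k, e)" "(j, d') \<noteq> (k, e)" for i j d d'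
  proof -
    from that have "i = 1" "j = 2" by auto
    with that compat[of d d'] show ?thesis by simp
  qed
  show "act X (c i d) m (canon m (face_comp t)) \<in> marked X m"
    if "1 \<le> m" "face_nf 2 ((i, d) # t)" "m + length ((i, d) # t) = 2"
       "set ((i, d) # t) \<inter> bad_factors k e = {}" for m i d t
  proof -
    have i: "1 \<le> i" "i \<le> 2" "(i, d) \<notin> bad_factors k e" using that by (auto simp: face_nf_def)
    then have "(i, d) \<noteq> (k, e)" by (auto simp: bad_factors_def)
    moreover have "m = 1" "t = []" using that(1,3) by (simp_all flip: length_0_conv)
    ultimately show ?thesis
      using act_id[OF cs cells[OF i(1,2)]] marked_edges[OF i] by (simp add: face_comp_def)
  qed
qed (rule that)

text \<open>Edges of a 3-cube: x p q runs along the first coordinate (the second and third being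
  p and q), y p q along the second (first p, third q), z p q along the third (first p, second q).
  cube_edge x y z i d j d' is the edge \<partial>_{j,d'} of the face \<partial>_{i,d}.\<close>

definition cube_edge :: "(bool \<Rightarrow> bool \<Rightarrow> 'c) \<Rightarrow> (bool \<Rightarrow> bool \<Rightarrow> 'c) \<Rightarrow> (bool \<Rightarrow> bool \<Rightarrow> 'c) \<Rightarrow>
    nat \<Rightarrow> bool \<Rightarrow> nat \<Rightarrow> bool \<Rightarrow> 'c" where
  "cube_edge x y z i d j d' =
     (if i = 1 then (if j = 1 then z d d' else y d d')
      else if i = 2 then (if j = 1 then z d' d else x d d')
      else (if j = 1 then y d' d else x d' d))"

lemma cube_edge_compat:
  "1 \<le> i \<Longrightarrow> i < j \<Longrightarrow> j \<le> 3 \<Longrightarrow> cube_edge x y z i d (j - 1) d' = cube_edge x y z j d' i d"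
  by (auto simp: cube_edge_def numeral_3_eq_3 le_Suc_eq)

lemma face_nf_3_cases:
  assumes "face_nf 3 l" "1 \<le> m" "m + length l = 3"
  obtains "l = []" "m = 3"
    | i d where "l = [(i, d)]" "m = 2" "1 \<le> i" "i \<le> 3"
    | i d j d' where "l = [(i, d), (j, d')]" "m = 1" "1 \<le> j" "j < i" "i \<le> 3"
  using assms by (cases l; cases "tl l"; cases "tl (tl l)") (auto simp: face_nf_def)

lemma comical_cube_filler:
  assumes com: "comical X" and k: "1 \<le> k" "k \<le> 3"
    and faces: "\<And>i d. 1 \<le> i \<Longrightarrow> i \<le> 3 \<Longrightarrow> (i, d) \<noteq> (k, e) \<Longrightarrow>
      c i d \<in> marked X 2 \<and> (\<forall>j d'. 1 \<le> j \<longrightarrow> j \<le> 2 \<longrightarrow> fc X 2 (c i d) j d' = cube_edge x y z i d j d')"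
    and marked_edges: "\<And>i d j d'. 1 \<le> j \<Longrightarrow> j < i \<Longrightarrow> i \<le> 3 \<Longrightarrow>
      (i, d) \<notin> bad_factors k e \<Longrightarrow> (j, d') \<notin> bad_factors k e \<Longrightarrow> cube_edge x y z i d j d' \<in> marked X 1"
  obtains u where "u \<in> marked X 3" and "\<And>i d. 1 \<le> i \<Longrightarrow> i \<le> 3 \<Longrightarrow> (i, d) \<noteq> (k, e) \<Longrightarrow> fc X 3 u i d = c i d"
proof (rule comical_horn_filler[OF com k, where c = c])
  note mc = comical_marked_cset[OF com] and cs = comical_cubical_set[OF com]
  have face_marked: "c i d \<in> marked X 2" if "1 \<le> i" "i \<le> 3" "(i, d) \<noteq> (k, e)" for i d
    using faces[OF that] by blast
  have face_edge: "fc X 2 (c i d) j d' = cube_edge x y z i d j d'"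
    if "1 \<le> i" "i \<le> 3" "(i, d) \<noteq> (k, e)" "1 \<le> j" "j \<le> 2" for i d j d'
    using faces[OF that(1-3)] that(4,5) by blast
  show cells: "c i d \<in> cells X (3 - 1)" if "1 \<le> i" "i \<le> 3" "(i, d) \<noteq> (k, e)" for i d
    using face_marked[OF that] mc by (auto simp: marked_cset_def)
  show "fc X (3 - 1) (c i d) (j - 1) d' = fc X (3 - 1) (c j d') i d"
    if "1 \<le> i" "i < j" "j \<le> 3" "(i, d) \<noteq> (k, e)" "(j, d') \<noteq> (k, e)" for i j d d'
  proof -
    have "fc X 2 (c i d) (j - 1) d' = cube_edge x y z i d (j - 1) d'"
      using face_edge[of i d "j - 1" d'] that by simp
    also have "\<dots> = cube_edge x y z j d' i d" using cube_edge_compat[OF that(1-3)] .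
    also have "\<dots> = fc X 2 (c j d') i d" using face_edge[of j d' i d] that by simp
    finally show ?thesis by simp
  qed
  show "act X (c i d) m (canon m (face_comp t)) \<in> marked X m"
    if "1 \<le> m" "face_nf 3 ((i, d) # t)" "m + length ((i, d) # t) = 3"
       "set ((i, d) # t) \<inter> bad_factors k e = {}" for m i d t
    using that(2,1,3)
  proof (cases rule: face_nf_3_cases)
    case 2
    have "(i, d) \<noteq> (k, e)" using that(4) by (auto simp: bad_factors_def)
    with 2 show ?thesis using face_marked act_id[OF cs cells] by (simp add: face_comp_def)
  next
    case (3 i' d' j d'')
    have nonbad: "(i, d) \<notin> bad_factors k e" "(j, d'') \<notin> bad_factors k e" using that(4) 3 by auto
    then have "(i, d) \<noteq> (k, e)" by (auto simp: bad_factors_def)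
    then have "act X (c i d) m (canon m (face_comp t)) = cube_edge x y z i d j d''"
      using 3 face_edge[of i d j d''] by (simp add: face_comp_def fc_def)
    then show ?thesis using 3 marked_edges[OF _ _ _ nonbad] by simp
  qed simp
qed (rule that)

lemma comical_cube_lid:
  assumes com: "comical X" and k: "1 \<le> k" "k \<le> 3"
    and faces: "\<And>i d. 1 \<le> i \<Longrightarrow> i \<le> 3 \<Longrightarrow> (i, d) \<noteq> (k, e) \<Longrightarrow>
      c i d \<in> marked X 2 \<and> (\<forall>j d'. 1 \<le> j \<longrightarrow> j \<le> 2 \<longrightarrow> fc X 2 (c i d) j d' = cube_edge x y z i d j d')"
    and marked_edges: "\<And>i d j d'. 1 \<le> j \<Longrightarrow> j < i \<Longrightarrow> i \<le> 3 \<Longrightarrow>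
      (i, d) \<notin> bad_factors k e \<Longrightarrow> (j, d') \<notin> bad_factors k e \<Longrightarrow> cube_edge x y z i d j d' \<in> marked X 1"
  obtains t where "t \<in> marked X 2" and "\<And>j d'. 1 \<le> j \<Longrightarrow> j \<le> 2 \<Longrightarrow> fc X 2 t j d' = cube_edge x y z k e j d'"
proof -
  note mc = comical_marked_cset[OF com] and cs = comical_cubical_set[OF com]
  have face_edge: "fc X 2 (c i d) j d' = cube_edge x y z i d j d'"
    if "1 \<le> i" "i \<le> 3" "(i, d) \<noteq> (k, e)" "1 \<le> j" "j \<le> 2" for i d j d'
    using faces[OF that(1-3)] that(4,5) by blast
  obtain u where u: "u \<in> marked X 3"
    and u_faces: "\<And>i d. 1 \<le> i \<Longrightarrow> i \<le> 3 \<Longrightarrow> (i, d) \<noteq> (k, e) \<Longrightarrow> fc X 3 u i d = c i d"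
  proof (rule comical_cube_filler[OF com k])
    show "c i d \<in> marked X 2 \<and> (\<forall>j d'. 1 \<le> j \<longrightarrow> j \<le> 2 \<longrightarrow> fc X 2 (c i d) j d' = cube_edge x y z i d j d')"
      if "1 \<le> i" "i \<le> 3" "(i, d) \<noteq> (k, e)" for i d
      using faces that by blast
    show "cube_edge x y z i d j d' \<in> marked X 1"
      if "1 \<le> j" "j < i" "i \<le> 3" "(i, d) \<notin> bad_factors k e" "(j, d') \<notin> bad_factors k e" for i d j d'
      using marked_edges that by blast
  qed (rule that)
  have u3: "u \<in> cells X (Suc (Suc (Suc 0)))" using u mc by (auto simp: marked_cset_def numeral_3_eq_3)
  have "fc X 3 u k e \<in> marked X (3 - 1)"
  proof (rule comical_box_lid_marked[OF com _ k])
    show "u \<in> cells X 3" using u3 by (simp add: numeral_3_eq_3)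
    show "fc X 3 u i d \<in> marked X (3 - 1)" if "1 \<le> i" "i \<le> 3" "(i, d) \<noteq> (k, e)" for i d
      using faces[OF that] u_faces[OF that] by simp
    show "act X u m (canon m (face_comp l)) \<in> marked X m"
      if "1 \<le> m" "face_nf 3 l" "m + length l = 3" "set l \<inter> bad_factors k e = {}" for m l
      using that(2,1,3)
    proof (cases rule: face_nf_3_cases)
      case 1
      then show ?thesis using u act_id[OF cs u3] by (simp add: face_comp_def numeral_3_eq_3)
    next
      case (2 i d)
      then have "(i, d) \<noteq> (k, e)" using that(4) by (auto simp: bad_factors_def)
      then show ?thesis using 2 faces u_faces by (simp add: face_comp_def fc_def)
    next
      case (3 i d j d')
      have nonbad: "(i, d) \<notin> bad_factors k e" "(j, d') \<notin> bad_factors k e" using that(4) 3 by auto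
      then have ik: "(i, d) \<noteq> (k, e)" by (auto simp: bad_factors_def)
      have "canon 1 (face_comp l) = canon 1 (canon 2 (face_fun i d) \<circ> canon 1 (face_fun j d'))"
        using 3 by (intro canon_eqI) (simp add: face_comp_def canon_def)
      moreover have "canon 2 (face_fun i d) \<in> box_hom 2 3" "canon 1 (face_fun j d') \<in> box_hom 1 2"
        using 3 face_in_box_hom[of i 2 d] face_in_box_hom[of j 1 d']
        by (simp_all add: numeral_2_eq_2 numeral_3_eq_3)
      moreover have "u \<in> cells X 3" using u3 by (simp add: numeral_3_eq_3)
      ultimately have "act X u m (canon m (face_comp l)) = fc X 2 (fc X 3 u i d) j d'"
        using 3 act_act[OF cs] by (simp add: fc_def)
      also have "\<dots> = cube_edge x y z i d j d'" using 3 ik u_faces face_edge by simp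
      finally show ?thesis using 3 marked_edges[OF _ _ _ nonbad] by simp
    qed
  qed simp
  moreover have "fc X 2 (fc X 3 u k e) j d' = cube_edge x y z k e j d'" if j: "1 \<le> j" "j \<le> 2" for j d'
  proof (cases "j < k")
    case True
    then have "fc X 2 (fc X 3 u k e) j d' = fc X 2 (c j d') (k - 1) e"
      using fc_fc[OF cs u3, of j k d' e] u_faces[of j d'] j k by (simp add: numeral_2_eq_2 numeral_3_eq_3)
    also have "\<dots> = cube_edge x y z j d' (k - 1) e" using face_edge[of j d' "k - 1" e] True j k by simp
    also have "\<dots> = cube_edge x y z k e j d'" using cube_edge_compat[of j k] True j k by simp
    finally show ?thesis .
  next
    case False
    then have "fc X 2 (fc X 3 u k e) j d' = fc X 2 (c (Suc j) d') k e"
      using fc_fc[OF cs u3, of k "Suc j" e d'] u_faces[of "Suc j" d'] j k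
      by (simp add: numeral_2_eq_2 numeral_3_eq_3)
    also have "\<dots> = cube_edge x y z (Suc j) d' k e" using face_edge[of "Suc j" d' k e] False j k by simp
    also have "\<dots> = cube_edge x y z k e j d'"
      using cube_edge_compat[of k "Suc j", symmetric] False j k by simp
    finally show ?thesis .
  qed
  ultimately show ?thesis using that by simp
qed

lemma comical_cube_lid_msq:
  assumes com: "comical X" and k: "1 \<le> k" "k \<le> 3"
    and faces: "\<And>i d. 1 \<le> i \<Longrightarrow> i \<le> 3 \<Longrightarrow> (i, d) \<noteq> (k, e) \<Longrightarrow> msq X (c i d)
      (cube_edge x y z i d 1 False) (cube_edge x y z i d 1 True)
      (cube_edge x y z i d 2 False) (cube_edge x y z i d 2 True)"
    and marked_edges: "\<And>i d j d'. 1 \<le> j \<Longrightarrow> j < i \<Longrightarrow> i \<le> 3 \<Longrightarrow>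
      (i, d) \<notin> bad_factors k e \<Longrightarrow> (j, d') \<notin> bad_factors k e \<Longrightarrow> cube_edge x y z i d j d' \<in> marked X 1"
  obtains t where "msq X t
    (cube_edge x y z k e 1 False) (cube_edge x y z k e 1 True)
    (cube_edge x y z k e 2 False) (cube_edge x y z k e 2 True)"
proof -
  have two: "j = 1 \<or> j = 2" if "1 \<le> j" "j \<le> 2" for j :: nat using that by auto
  obtain t where t: "t \<in> marked X 2" "\<And>j d'. 1 \<le> j \<Longrightarrow> j \<le> 2 \<Longrightarrow> fc X 2 t j d' = cube_edge x y z k e j d'"
  proof (rule comical_cube_lid[OF com k, where c = c])
    show "c i d \<in> marked X 2 \<and> (\<forall>j d'. 1 \<le> j \<longrightarrow> j \<le> 2 \<longrightarrow> fc X 2 (c i d) j d' = cube_edge x y z i d j d')"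
      if "1 \<le> i" "i \<le> 3" "(i, d) \<noteq> (k, e)" for i d
      using faces[OF that] two unfolding msq_def by (metis (full_types))
  qed (use marked_edges that in auto)
  show ?thesis by (rule that[of t]) (use t in \<open>simp add: msq_def\<close>)
qed

definition bool_table :: "'c \<Rightarrow> 'c \<Rightarrow> 'c \<Rightarrow> 'c \<Rightarrow> bool \<Rightarrow> bool \<Rightarrow> 'c" where
  "bool_table a00 a01 a10 a11 p q = (if p then (if q then a11 else a10) else (if q then a01 else a00))"

definition cube_faces :: "'c \<Rightarrow> 'c \<Rightarrow> 'c \<Rightarrow> 'c \<Rightarrow> 'c \<Rightarrow> 'c \<Rightarrow> nat \<Rightarrow> bool \<Rightarrow> 'c" where
  "cube_faces C10 C11 C20 C21 C30 C31 i d =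
     (if i = 1 then (if d then C11 else C10)
      else if i = 2 then (if d then C21 else C20)
      else (if d then C31 else C30))"

lemma cube_index_cases: "1 \<le> i \<Longrightarrow> i \<le> 3 \<Longrightarrow> i = 1 \<or> i = 2 \<or> i = (3 :: nat)"
  by auto

text \<open>In cube_lid_k_e the given faces \<partial>_{i,d} of a 3-cube are the squares C_id, with edges
  named as for cube_edge; the result is a marked square in place of the missing face \<partial>_{k,e}.\<close>

lemma cube_lid_1_0:
  assumes com: "comical X"
    and C: "msq X C11 z10 z11 y10 y11" "msq X C20 z00 z10 x00 x01" "msq X C21 z01 z11 x10 x11"
        "msq X C30 y00 y10 x00 x10" "msq X C31 y01 y11 x01 x11"
    and marked: "x10 \<in> marked X 1" "x11 \<in> marked X 1"
  obtains t where "msq X t z00 z01 y00 y01"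
proof (rule comical_cube_lid_msq[OF com,
      where k = 1 and e = False and c = "cube_faces C11 C11 C20 C21 C30 C31"
    and x = "bool_table x00 x01 x10 x11" and y = "bool_table y00 y01 y10 y11"
    and z = "bool_table z00 z01 z10 z11"],
    goal_cases)
  case (3 i d)
  then show ?case
    using C cube_index_cases[of i] by (cases d) (auto simp: cube_faces_def cube_edge_def bool_table_def)
qed (use marked that in \<open>auto simp: bad_factors_def cube_edge_def bool_table_def\<close>)

lemma cube_lid_1_1:
  assumes com: "comical X"
    and C: "msq X C10 z00 z01 y00 y01" "msq X C20 z00 z10 x00 x01" "msq X C21 z01 z11 x10 x11"
        "msq X C30 y00 y10 x00 x10" "msq X C31 y01 y11 x01 x11"
    and marked: "x00 \<in> marked X 1" "x01 \<in> marked X 1"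
  obtains t where "msq X t z10 z11 y10 y11"
proof (rule comical_cube_lid_msq[OF com,
      where k = 1 and e = True and c = "cube_faces C10 C10 C20 C21 C30 C31"
    and x = "bool_table x00 x01 x10 x11" and y = "bool_table y00 y01 y10 y11"
    and z = "bool_table z00 z01 z10 z11"],
    goal_cases)
  case (3 i d)
  then show ?case
    using C cube_index_cases[of i] by (cases d) (auto simp: cube_faces_def cube_edge_def bool_table_def)
qed (use marked that in \<open>auto simp: bad_factors_def cube_edge_def bool_table_def\<close>)

lemma cube_lid_2_0:
  assumes com: "comical X"
    and C: "msq X C10 z00 z01 y00 y01" "msq X C11 z10 z11 y10 y11" "msq X C21 z01 z11 x10 x11"
        "msq X C30 y00 y10 x00 x10" "msq X C31 y01 y11 x01 x11"
    and marked: "y11 \<in> marked X 1"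
  obtains t where "msq X t z00 z10 x00 x01"
proof (rule comical_cube_lid_msq[OF com,
      where k = 2 and e = False and c = "cube_faces C10 C11 C21 C21 C30 C31"
    and x = "bool_table x00 x01 x10 x11" and y = "bool_table y00 y01 y10 y11"
    and z = "bool_table z00 z01 z10 z11"],
    goal_cases)
  case (3 i d)
  then show ?case
    using C cube_index_cases[of i] by (cases d) (auto simp: cube_faces_def cube_edge_def bool_table_def)
qed (use marked that in \<open>auto simp: bad_factors_def cube_edge_def bool_table_def\<close>)

lemma cube_lid_2_1:
  assumes com: "comical X"
    and C: "msq X C10 z00 z01 y00 y01" "msq X C11 z10 z11 y10 y11" "msq X C20 z00 z10 x00 x01"
        "msq X C30 y00 y10 x00 x10" "msq X C31 y01 y11 x01 x11"
    and marked: "y00 \<in> marked X 1"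
  obtains t where "msq X t z01 z11 x10 x11"
proof (rule comical_cube_lid_msq[OF com,
      where k = 2 and e = True and c = "cube_faces C10 C11 C20 C20 C30 C31"
    and x = "bool_table x00 x01 x10 x11" and y = "bool_table y00 y01 y10 y11"
    and z = "bool_table z00 z01 z10 z11"],
    goal_cases)
  case (3 i d)
  then show ?case
    using C cube_index_cases[of i] by (cases d) (auto simp: cube_faces_def cube_edge_def bool_table_def)
qed (use marked that in \<open>auto simp: bad_factors_def cube_edge_def bool_table_def\<close>)

lemma face_in_box_hom_0_1: "canon 0 (face_fun 1 d) \<in> box_hom 0 1"
  using face_in_box_hom[of 1 0 d] by simp

lemma face_in_box_hom_1_2: "i = 1 \<or> i = 2 \<Longrightarrow> canon 1 (face_fun i d) \<in> box_hom 1 2"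
  using face_in_box_hom[of i 1 d] by (auto simp: numeral_2_eq_2)

lemma degen_in_box_hom_1_0: "canon 1 (degen_fun 1) \<in> box_hom 1 0"
  using degen_in_box_hom[of 1 0] by simp

lemma degen_in_box_hom_2_1: "i = 1 \<or> i = 2 \<Longrightarrow> canon 2 (degen_fun i) \<in> box_hom 2 1"
  using degen_in_box_hom[of i 1] by (auto simp: numeral_2_eq_2)

lemma conn_in_box_hom_2_1: "canon 2 (conn_fun 1 e) \<in> box_hom 2 1"
  using conn_in_box_hom[of 1 0 e] by (simp add: numeral_2_eq_2)

definition sigma1_sq :: "('c, 'z) mcset_scheme \<Rightarrow> 'c \<Rightarrow> 'c" where
  "sigma1_sq X f = act X f 2 (canon 2 (degen_fun 1))"

definition sigma2_sq :: "('c, 'z) mcset_scheme \<Rightarrow> 'c \<Rightarrow> 'c" where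
  "sigma2_sq X f = act X f 2 (canon 2 (degen_fun 2))"

definition gamma_sq :: "('c, 'z) mcset_scheme \<Rightarrow> 'c \<Rightarrow> 'c" where
  "gamma_sq X f = act X f 2 (canon 2 (conn_fun 1 True))"

context
  fixes X :: "('c, 'z) mcset_scheme"
  assumes cs: "cubical_set X"
begin

lemma sig1_in_cells: "x \<in> cells X 0 \<Longrightarrow> sig1 X x \<in> cells X 1"
  unfolding sig1_def using act_in_cells[OF cs _ degen_in_box_hom_1_0] .

lemma fc_sig1:
  assumes x: "x \<in> cells X 0"
  shows "fc X 1 (sig1 X x) 1 d = x"
proof -
  have "fc X 1 (sig1 X x) 1 d = act X x 0 (canon 0 (canon 1 (degen_fun 1) \<circ> canon 0 (face_fun 1 d)))"
    unfolding fc_def sig1_def using act_act[OF cs x degen_in_box_hom_1_0 face_in_box_hom_0_1] by simp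
  also have "canon 0 (canon 1 (degen_fun 1) \<circ> canon 0 (face_fun 1 d)) = canon 0 id"
    by (rule canon_eqI) (simp add: canon_def face_fun_def degen_fun_def)
  finally show ?thesis using act_id[OF cs x] by simp
qed

lemma hom1_sig1: "x \<in> cells X 0 \<Longrightarrow> hom1 X x x (sig1 X x)"
  unfolding hom1_def using sig1_in_cells fc_sig1 by blast

lemma hom1_cells: "hom1 X x y f \<Longrightarrow> f \<in> cells X 1 \<and> x \<in> cells X 0 \<and> y \<in> cells X 0"
  unfolding hom1_def using fc_in_cells[OF cs, of f 0 1] by auto

lemma fc_act_square_id:
  assumes f: "f \<in> cells X 1" and A: "A \<in> box_hom 2 1" and i: "i = 1 \<or> i = 2"
    and A_face: "\<And>b. A (face_fun i d [b]) = [b]"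
  shows "fc X 2 (act X f 2 A) i d = f"
proof -
  have "fc X 2 (act X f 2 A) i d = act X f 1 (canon 1 (A \<circ> canon 1 (face_fun i d)))"
    unfolding fc_def using act_act[OF cs f A face_in_box_hom_1_2[OF i]] by simp
  also have "canon 1 (A \<circ> canon 1 (face_fun i d)) = canon 1 id"
    by (rule canon_eqI) (auto simp: canon_def length_Suc_conv A_face)
  finally show ?thesis using act_id[OF cs f] by simp
qed

lemma fc_act_square_const:
  assumes f: "f \<in> cells X 1" and A: "A \<in> box_hom 2 1" and i: "i = 1 \<or> i = 2"
    and A_face: "\<And>b. A (face_fun i d [b]) = [d']"
  shows "fc X 2 (act X f 2 A) i d = sig1 X (fc X 1 f 1 d')"
proof -
  have "fc X 2 (act X f 2 A) i d = act X f 1 (canon 1 (A \<circ> canon 1 (face_fun i d)))"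
    unfolding fc_def using act_act[OF cs f A face_in_box_hom_1_2[OF i]] by simp
  also have "canon 1 (A \<circ> canon 1 (face_fun i d)) =
      canon 1 (canon 0 (face_fun 1 d') \<circ> canon 1 (degen_fun 1))"
  proof (rule canon_eqI)
    fix v :: "bool list" assume "length v = 1"
    then obtain b where "v = [b]" by (auto simp: length_Suc_conv)
    then show "(A \<circ> canon 1 (face_fun i d)) v = (canon 0 (face_fun 1 d') \<circ> canon 1 (degen_fun 1)) v"
      by (simp add: canon_def A_face) (simp add: face_fun_def degen_fun_def)
  qed
  finally show ?thesis
    unfolding fc_def sig1_def using act_act[OF cs f face_in_box_hom_0_1 degen_in_box_hom_1_0] by simp
qed

end

section \<open>Homotopy and composition of 1-cubes\<close>

text \<open>Composites of the first kind of the definition of composite; all four kinds turn out to be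
  composites of this kind.\<close>

definition composite_a ::
    "('c, 'z) mcset_scheme \<Rightarrow> 'c \<Rightarrow> 'c \<Rightarrow> 'c \<Rightarrow> 'c \<Rightarrow> 'c \<Rightarrow> 'c \<Rightarrow> bool" where
  "composite_a X x y z f g a \<longleftrightarrow>
     hom1 X x y f \<and> hom1 X y z g \<and> (\<exists>s. msq X s a g f (sig1 X z))"

context
  fixes X :: "('c, 'z) mcset_scheme"
  assumes com: "comical X"
begin

private lemmas mc = comical_marked_cset[OF com] and cs = comical_cubical_set[OF com]

lemma sig1_marked:
  assumes x: "x \<in> cells X 0"
  shows "sig1 X x \<in> marked X 1"
proof -
  have "degenerate X 1 (sig1 X x)"
    unfolding degenerate_def sig1_def using x by (intro disjI1 exI[of _ 0] exI[of _ x] exI[of _ 1]) simp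
  then show ?thesis using degenerate_in_marked[OF mc sig1_in_cells[OF cs x]] by simp
qed

lemma msq_sigma1_sq:
  assumes "hom1 X x y f"
  shows "msq X (sigma1_sq X f) f f (sig1 X x) (sig1 X y)"
proof -
  have f: "f \<in> cells X 1" using assms by (simp add: hom1_def)
  have A: "canon 2 (degen_fun 1) \<in> box_hom 2 1" by (rule degen_in_box_hom_2_1) simp
  have "degenerate X 2 (sigma1_sq X f)"
    unfolding degenerate_def sigma1_sq_def using f
    by (intro disjI1 exI[of _ 1] exI[of _ f] exI[of _ 1]) (simp add: numeral_2_eq_2)
  then have "sigma1_sq X f \<in> marked X 2" unfolding sigma1_sq_def
    using degenerate_in_marked[OF mc act_in_cells[OF cs f A]] by simp
  moreover have "fc X 2 (sigma1_sq X f) 1 d = f" for d unfolding sigma1_sq_def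
    by (rule fc_act_square_id[OF cs f A]) (simp_all add: canon_def face_fun_def degen_fun_def)
  moreover have "fc X 2 (sigma1_sq X f) 2 d = sig1 X (fc X 1 f 1 d)" for d unfolding sigma1_sq_def
    by (rule fc_act_square_const[OF cs f A]) (simp_all add: canon_def face_fun_def degen_fun_def)
  ultimately show ?thesis using assms by (simp add: msq_def hom1_def)
qed

lemma msq_sigma2_sq:
  assumes "hom1 X x y f"
  shows "msq X (sigma2_sq X f) (sig1 X x) (sig1 X y) f f"
proof -
  have f: "f \<in> cells X 1" using assms by (simp add: hom1_def)
  have A: "canon 2 (degen_fun 2) \<in> box_hom 2 1" by (rule degen_in_box_hom_2_1) simp
  have "degenerate X 2 (sigma2_sq X f)"
    unfolding degenerate_def sigma2_sq_def using f
    by (intro disjI1 exI[of _ 1] exI[of _ f] exI[of _ 2]) (simp add: numeral_2_eq_2)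
  then have "sigma2_sq X f \<in> marked X 2" unfolding sigma2_sq_def
    using degenerate_in_marked[OF mc act_in_cells[OF cs f A]] by simp
  moreover have "fc X 2 (sigma2_sq X f) 1 d = sig1 X (fc X 1 f 1 d)" for d unfolding sigma2_sq_def
    by (rule fc_act_square_const[OF cs f A]) (simp_all add: canon_def face_fun_def degen_fun_def)
  moreover have "fc X 2 (sigma2_sq X f) 2 d = f" for d unfolding sigma2_sq_def
    by (rule fc_act_square_id[OF cs f A]) (simp_all add: canon_def face_fun_def degen_fun_def)
  ultimately show ?thesis using assms by (simp add: msq_def hom1_def)
qed

lemma msq_gamma_sq:
  assumes "hom1 X x y f"
  shows "msq X (gamma_sq X f) f (sig1 X y) f (sig1 X y)"
proof -
  have f: "f \<in> cells X 1" using assms by (simp add: hom1_def)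
  have A: "canon 2 (conn_fun 1 True) \<in> box_hom 2 1" by (rule conn_in_box_hom_2_1)
  have "degenerate X 2 (gamma_sq X f)"
    unfolding degenerate_def gamma_sq_def using f
    by (intro disjI2 exI[of _ 0] exI[of _ f] exI[of _ 1] exI[of _ True]) (simp add: numeral_2_eq_2)
  then have "gamma_sq X f \<in> marked X 2" unfolding gamma_sq_def
    using degenerate_in_marked[OF mc act_in_cells[OF cs f A]] by simp
  moreover have "fc X 2 (gamma_sq X f) i False = f" if "i = 1 \<or> i = 2" for i unfolding gamma_sq_def
    by (rule fc_act_square_id[OF cs f A that])
       (use that in \<open>auto simp: canon_def face_fun_def conn_fun_def\<close>)
  moreover have "fc X 2 (gamma_sq X f) i True = sig1 X (fc X 1 f 1 True)" if "i = 1 \<or> i = 2" for i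
    unfolding gamma_sq_def
    by (rule fc_act_square_const[OF cs f A that])
       (use that in \<open>auto simp: canon_def face_fun_def conn_fun_def\<close>)
  ultimately show ?thesis using assms by (simp add: msq_def hom1_def)
qed

lemma msq_hom1:
  assumes "msq X s a b c d"
  shows "hom1 X (fc X 1 c 1 False) (fc X 1 d 1 False) a" "hom1 X (fc X 1 c 1 True) (fc X 1 d 1 True) b"
    and "hom1 X (fc X 1 a 1 False) (fc X 1 b 1 False) c" "hom1 X (fc X 1 a 1 True) (fc X 1 b 1 True) d"
proof -
  have s: "s \<in> cells X (Suc (Suc 0))"
    using assms mc by (auto simp: msq_def marked_cset_def numeral_2_eq_2)
  have vertex: "fc X 1 (fc X 2 s 1 e) 1 e' = fc X 1 (fc X 2 s 2 e') 1 e" for e e'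
    using fc_fc[OF cs s, of 1 2 e e'] by (simp add: numeral_2_eq_2)
  have edge: "fc X 2 s i e \<in> cells X 1" if "i = 1 \<or> i = 2" for i e
    using fc_in_cells[OF cs s, of i e] that by (auto simp: numeral_2_eq_2)
  show "hom1 X (fc X 1 c 1 False) (fc X 1 d 1 False) a" "hom1 X (fc X 1 c 1 True) (fc X 1 d 1 True) b"
    and "hom1 X (fc X 1 a 1 False) (fc X 1 b 1 False) c" "hom1 X (fc X 1 a 1 True) (fc X 1 b 1 True) d"
    using assms vertex edge by (auto simp: msq_def hom1_def)
qed

lemma msq_const:
  assumes "z \<in> cells X 0"
  shows "msq X (sigma1_sq X (sig1 X z)) (sig1 X z) (sig1 X z) (sig1 X z) (sig1 X z)"
  using msq_sigma1_sq[OF hom1_sig1[OF cs assms]] .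

lemma composite_a_hom1: "composite_a X x y z f g a \<Longrightarrow> hom1 X x z a"
  unfolding composite_a_def
  using msq_hom1(1) fc_sig1[OF cs] hom1_cells[OF cs]
  by (metis hom1_def)

lemma composite_a_exists:
  assumes f: "hom1 X x y f" and g: "hom1 X y z g"
  obtains a where "composite_a X x y z f g a"
proof -
  have z: "z \<in> cells X 0" using hom1_cells[OF cs g] by simp
  let ?c = "\<lambda>i d. if i = (1 :: nat) then g else if d then sig1 X z else f"
  obtain s where s: "s \<in> marked X 2" "\<And>i d. 1 \<le> i \<Longrightarrow> i \<le> 2 \<Longrightarrow> (i, d) \<noteq> (1, False) \<Longrightarrow> fc X 2 s i d = ?c i d"
  proof (rule comical_square_filler[OF com, where k = 1 and e = False and c = ?c])
    show "?c i d \<in> cells X 1" if "1 \<le> i" "i \<le> 2" "(i, d) \<noteq> (1, False)" for i d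
      using f g sig1_in_cells[OF cs z] by (auto simp: hom1_def)
    show "fc X 1 (?c 1 d) 1 d' = fc X 1 (?c 2 d') 1 d" if "(1, d) \<noteq> (1 :: nat, False)" for d d'
      using that f g fc_sig1[OF cs z] by (cases d') (auto simp: hom1_def)
    show "?c i d \<in> marked X 1" if "1 \<le> i" "i \<le> 2" "(i, d) \<notin> bad_factors 1 False" for i d
      using that sig1_marked[OF z] by (auto simp: bad_factors_def)
  qed (auto intro: that)
  then have "msq X s (fc X 2 s 1 False) g f (sig1 X z)" by (simp add: msq_def)
  then show ?thesis using that f g unfolding composite_a_def by blast
qed

lemma composite_a_htpy:
  assumes "composite_a X x y z f g a" and "composite_a X x y z f g a'"
  shows "htpy X x z a a'"
proof -
  obtain s where s: "msq X s a g f (sig1 X z)" and g: "hom1 X y z g"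
    using assms(1) by (auto simp: composite_a_def)
  obtain s' where s': "msq X s' a' g f (sig1 X z)" using assms(2) by (auto simp: composite_a_def)
  have z: "z \<in> cells X 0" using hom1_cells[OF cs g] by simp
  obtain t where "msq X t a' (sig1 X z) a (sig1 X z)"
    using cube_lid_1_0[OF com msq_gamma_sq[OF g] s' msq_const[OF z] s msq_const[OF z]
        sig1_marked[OF z] sig1_marked[OF z]] .
  then show ?thesis using assms composite_a_hom1 unfolding htpy_def by blast
qed

lemma composite_a_htpy_result:
  assumes "composite_a X x y z f g a" and "htpy X x z a a'"
  shows "composite_a X x y z f g a'"
proof -
  obtain s where s: "msq X s a g f (sig1 X z)" and g: "hom1 X y z g"
    using assms(1) by (auto simp: composite_a_def)
  obtain h where h: "msq X h a' (sig1 X z) a (sig1 X z)" using assms(2) by (auto simp: htpy_def)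
  have z: "z \<in> cells X 0" using hom1_cells[OF cs g] by simp
  obtain t where "msq X t a' g f (sig1 X z)"
    using cube_lid_2_0[OF com h msq_gamma_sq[OF g] msq_const[OF z] s msq_const[OF z] sig1_marked[OF z]] .
  then show ?thesis using assms(1) unfolding composite_a_def by blast
qed

lemma htpy_refl: "hom1 X x y f \<Longrightarrow> htpy X x y f f"
  unfolding htpy_def using msq_gamma_sq by blast

lemma htpy_iff_composite_a: "htpy X x y f g \<longleftrightarrow> hom1 X x y g \<and> composite_a X x y y f (sig1 X y) g"
  unfolding htpy_def composite_a_def
  using hom1_sig1[OF cs] hom1_cells[OF cs] by blast

lemma htpy_sym: "htpy X x y f g \<Longrightarrow> htpy X x y g f"
  using composite_a_htpy htpy_refl htpy_iff_composite_a by (metis htpy_def)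

lemma htpy_trans: "htpy X x y f g \<Longrightarrow> htpy X x y g h \<Longrightarrow> htpy X x y f h"
  using composite_a_htpy_result htpy_iff_composite_a by (metis htpy_def)

lemma composite_a_of_square_c:
  assumes f: "hom1 X x y f" and g: "hom1 X y z g" and s: "msq X s f (sig1 X z) c g"
  shows "composite_a X x y z f g c"
proof -
  have z: "z \<in> cells X 0" using hom1_cells[OF cs g] by simp
  obtain a s' where a: "composite_a X x y z f g a" and s': "msq X s' a g f (sig1 X z)"
    using composite_a_exists[OF f g] by (metis composite_a_def)
  obtain t where "msq X t a (sig1 X z) c (sig1 X z)"
    using cube_lid_2_0[OF com s' msq_const[OF z] msq_gamma_sq[OF g] s msq_const[OF z] sig1_marked[OF z]] .
  moreover have "hom1 X x z c" using msq_hom1(3)[OF s] f fc_sig1[OF cs z] by (simp add: hom1_def)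
  ultimately have "htpy X x z a c" using htpy_sym composite_a_hom1[OF a] unfolding htpy_def by blast
  then show ?thesis using composite_a_htpy_result[OF a] by blast
qed

lemma composite_a_of_square_b:
  assumes f: "hom1 X x y f" and g: "hom1 X y z g" and s: "msq X s f b (sig1 X x) g"
  shows "composite_a X x y z f g b"
proof -
  have x: "x \<in> cells X 0" and z: "z \<in> cells X 0"
    using hom1_cells[OF cs f] hom1_cells[OF cs g] by simp_all
  obtain a s' where a: "composite_a X x y z f g a" and s': "msq X s' a g f (sig1 X z)"
    using composite_a_exists[OF f g] by (metis composite_a_def)
  obtain t where "msq X t a (sig1 X z) b (sig1 X z)"
    using cube_lid_1_1[OF com s' msq_sigma1_sq[OF composite_a_hom1[OF a]] msq_gamma_sq[OF g] s
        msq_const[OF z] sig1_marked[OF x] sig1_marked[OF z]] .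
  moreover have "hom1 X x z b" using msq_hom1(2)[OF s] g fc_sig1[OF cs x] by (simp add: hom1_def)
  ultimately have "htpy X x z a b" using htpy_sym composite_a_hom1[OF a] unfolding htpy_def by blast
  then show ?thesis using composite_a_htpy_result[OF a] by blast
qed

lemma composite_a_of_square_d:
  assumes f: "hom1 X x y f" and g: "hom1 X y z g" and s: "msq X s (sig1 X x) g f d"
  shows "composite_a X x y z f g d"
proof -
  have x: "x \<in> cells X 0" and z: "z \<in> cells X 0"
    using hom1_cells[OF cs f] hom1_cells[OF cs g] by simp_all
  obtain a s' where a: "composite_a X x y z f g a" and s': "msq X s' a g f (sig1 X z)"
    using composite_a_exists[OF f g] by (metis composite_a_def)
  obtain t where "msq X t a (sig1 X z) d (sig1 X z)"
    using cube_lid_2_1[OF com msq_sigma1_sq[OF composite_a_hom1[OF a]] msq_gamma_sq[OF g] s' s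
        msq_const[OF z] sig1_marked[OF x]] .
  moreover have "hom1 X x z d" using msq_hom1(4)[OF s] g fc_sig1[OF cs x] by (simp add: hom1_def)
  ultimately have "htpy X x z a d" using htpy_sym composite_a_hom1[OF a] unfolding htpy_def by blast
  then show ?thesis using composite_a_htpy_result[OF a] by blast
qed

lemma composite_imp_composite_a: "composite X x y z f g a \<Longrightarrow> composite_a X x y z f g a"
  unfolding composite_def
  using composite_a_of_square_b composite_a_of_square_c composite_a_of_square_d
  by (auto simp: composite_a_def)

lemma composite_a_htpy_left:
  assumes "htpy X x y f f'" and "composite_a X x y z f g a"
  shows "composite_a X x y z f' g a"
proof -
  obtain h where h: "msq X h f' (sig1 X y) f (sig1 X y)" and f': "hom1 X x y f'"
    using assms(1) by (auto simp: htpy_def)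
  obtain s where s: "msq X s a g f (sig1 X z)" and g: "hom1 X y z g"
    using assms(2) by (auto simp: composite_a_def)
  have z: "z \<in> cells X 0" using hom1_cells[OF cs g] by simp
  obtain t where "msq X t f' (sig1 X z) a g"
    using cube_lid_1_0[OF com msq_sigma2_sq[OF g] h msq_const[OF z] s msq_sigma1_sq[OF g]
        sig1_marked[OF z] sig1_marked[OF z]] .
  then show ?thesis by (rule composite_a_of_square_c[OF f' g])
qed

lemma composite_a_htpy_right:
  assumes "htpy X y z g g'" and "composite_a X x y z f g a"
  shows "composite_a X x y z f g' a"
proof -
  obtain h where h: "msq X h g' (sig1 X z) g (sig1 X z)" and g': "hom1 X y z g'"
    using assms(1) by (auto simp: htpy_def)
  obtain s where s: "msq X s a g f (sig1 X z)" and f: "hom1 X x y f"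
    using assms(2) by (auto simp: composite_a_def)
  have z: "z \<in> cells X 0" using hom1_cells[OF cs g'] by simp
  obtain t where "msq X t a g' f (sig1 X z)"
    using cube_lid_2_0[OF com msq_gamma_sq[OF composite_a_hom1[OF assms(2)]] h msq_const[OF z] s
        msq_const[OF z] sig1_marked[OF z]] .
  then show ?thesis using f g' unfolding composite_a_def by blast
qed

lemma composite_a_assoc:
  assumes a: "composite_a X w x y f g a" and b: "composite_a X w y z a h b"
    and c: "composite_a X x y z g h c" and d: "composite_a X w x z f c d"
  shows "htpy X w z b d"
proof -
  obtain sa where sa: "msq X sa a g f (sig1 X y)" using a by (auto simp: composite_a_def)
  obtain sc where sc: "msq X sc c h g (sig1 X z)" and h: "hom1 X y z h"
    using c by (auto simp: composite_a_def)
  obtain sd where sd: "msq X sd d c f (sig1 X z)" using d by (auto simp: composite_a_def)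
  have y: "y \<in> cells X 0" and z: "z \<in> cells X 0" using hom1_cells[OF cs h] by simp_all
  obtain t where "msq X t d h a (sig1 X z)"
    using cube_lid_1_0[OF com sc sd msq_sigma1_sq[OF h] sa msq_const[OF z]
        sig1_marked[OF y] sig1_marked[OF z]] .
  then have "composite_a X w y z a h d" using b unfolding composite_a_def by blast
  then show ?thesis using composite_a_htpy[OF b] by blast
qed

lemma composite_a_sig1_left: "hom1 X x y f \<Longrightarrow> composite_a X x x y (sig1 X x) f f"
  unfolding composite_a_def using msq_sigma1_sq hom1_sig1[OF cs] hom1_cells[OF cs]
  by blast

lemma composite_a_sig1_right: "hom1 X x y f \<Longrightarrow> composite_a X x y y f (sig1 X y) f"
  unfolding composite_a_def using msq_gamma_sq hom1_sig1[OF cs] hom1_cells[OF cs]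
  by blast

end

theorem proposition4p7:
  fixes X :: "('c, 'z) mcset_scheme"
  assumes "comical X"
  shows
    "(\<forall>x y f. hom1 X x y f \<longrightarrow> htpy X x y f f) \<and>
     (\<forall>x y f g. htpy X x y f g \<longrightarrow> htpy X x y g f) \<and>
     (\<forall>x y f g h. htpy X x y f g \<longrightarrow> htpy X x y g h \<longrightarrow> htpy X x y f h) \<and>
     (\<forall>x y z f g. hom1 X x y f \<longrightarrow> hom1 X y z g \<longrightarrow> (\<exists>a. composite X x y z f g a)) \<and>
     (\<forall>x y z f g a. composite X x y z f g a \<longrightarrow> hom1 X x z a) \<and>
     (\<forall>x y z f f' g g' a a'. htpy X x y f f' \<longrightarrow> htpy X y z g g' \<longrightarrow>
        composite X x y z f g a \<longrightarrow> composite X x y z f' g' a' \<longrightarrow> htpy X x z a a') \<and>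
     (\<forall>x. x \<in> cells X 0 \<longrightarrow> hom1 X x x (sig1 X x)) \<and>
     (\<forall>x y f a. composite X x x y (sig1 X x) f a \<longrightarrow> htpy X x y a f) \<and>
     (\<forall>x y f a. composite X x y y f (sig1 X y) a \<longrightarrow> htpy X x y a f) \<and>
     (\<forall>w x y z f g h a b c d. composite X w x y f g a \<longrightarrow> composite X w y z a h b \<longrightarrow>
        composite X x y z g h c \<longrightarrow> composite X w x z f c d \<longrightarrow> htpy X w z b d)"
proof (intro conjI allI impI)
  note com = assms and to_a = composite_imp_composite_a[OF assms]
  show "htpy X x y f f" if "hom1 X x y f" for x y f using htpy_refl[OF com that] .
  show "htpy X x y g f" if "htpy X x y f g" for x y f g using htpy_sym[OF com that] .
  show "htpy X x y f h" if "htpy X x y f g" "htpy X x y g h" for x y f g h using htpy_trans[OF com that] .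
  show "\<exists>a. composite X x y z f g a" if "hom1 X x y f" "hom1 X y z g" for x y z f g
    using composite_a_exists[OF com that] by (metis composite_a_def composite_def)
  show "hom1 X x z a" if "composite X x y z f g a" for x y z f g a
    using composite_a_hom1[OF com to_a[OF that]] .
  show "htpy X x z a a'" if "htpy X x y f f'" "htpy X y z g g'"
    "composite X x y z f g a" "composite X x y z f' g' a'" for x y z f f' g g' a a'
    using composite_a_htpy_right[OF com that(2) composite_a_htpy_left[OF com that(1) to_a[OF that(3)]]]
      composite_a_htpy[OF com _ to_a[OF that(4)]] by blast
  show "hom1 X x x (sig1 X x)" if "x \<in> cells X 0" for x
    using hom1_sig1[OF comical_cubical_set[OF com] that] .
  show "htpy X x y a f" if "composite X x x y (sig1 X x) f a" for x y f a
    using composite_a_htpy[OF com to_a[OF that] composite_a_sig1_left[OF com]] to_a[OF that]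
    by (auto simp: composite_a_def)
  show "htpy X x y a f" if "composite X x y y f (sig1 X y) a" for x y f a
    using composite_a_htpy[OF com to_a[OF that] composite_a_sig1_right[OF com]] to_a[OF that]
    by (auto simp: composite_a_def)
  show "htpy X w z b d" if "composite X w x y f g a" "composite X w y z a h b"
    "composite X x y z g h c" "composite X w x z f c d" for w x y z f g h a b c d
    using composite_a_assoc[OF com to_a[OF that(1)] to_a[OF that(2)] to_a[OF that(3)] to_a[OF that(4)]] .
qed

end
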